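(* Let $K$ be a field of characteristic $\neq2$ with involution $a\mapsto\bar a$, let $\varepsilon\in\{1,-1\}$ with $\varepsilon=1$ if the involution is nonidentity, and let $\Phi$ be an $n\times n$ Frobenius block with characteristic polynomial $\chi(x)=p(x)^s=x^n+\alpha_1x^{n-1}+\dots+\alpha_n$, $p$ monic irreducible. A nonsingular matrix $X$ with $X=\varepsilon X^*=\Phi^*X\Phi$ exists if and only if (C1) $\chi(x)=\chi^\vee(x)$, and (C2) if the involution is the identity and $\varepsilon=(-1)^n$, then $\deg p(x)>1$. When these hold, one can take $X=[a_{j-i}]_{i,j=1}^n$, where $a_{1-n},\dots,a_{n-1}$ are terms of the $\chi$-recurrent sequence determined by the fragment $v=(a_{-m},\dots,a_m)$ (of length $n$ or $n+1$) equal to: (a) $(\varepsilon\bar\alpha_n-1,0,\dots,0,\alpha_n-\varepsilon)$ if $n=2m$ and $\alpha_n\neq\varepsilon$; (b) $(\alpha_1,-1,0,\dots,0,-1,\alpha_1)$ (and $v=(\alpha_1,-2,\alpha_1)$ for $n=2$) if $n=2m$, $\varepsilon=1$, and the involution is the identity; (c) $(-k,0,\dots,0,k)$ if $n=2m$, $\alpha_n=1$ and the involution is nonidentity, and also if $n=2m+1$, $p(x)=x+\alpha$, $\alpha^{n-1}=-1$; (d) $(\varepsilon,0,\dots,0,1)$ if $n=2m+1$, in every case other than $p(x)=x+\alpha$ with $\alpha^{n-1}=-1$.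
   Context: $M^*=[\bar m_{ji}]$ for $M=[m_{ij}]$. For $f=a_0x^n+\dots+a_n$ with $a_n\ne0$, $f^\vee(x)=\bar a_n^{-1}(\bar a_nx^n+\dots+\bar a_1x+\bar a_0)$. A Frobenius block is an $n\times n$ matrix with ones on the subdiagonal, last column $(-c_n,\dots,-c_1)^T$, zeros elsewhere, and characteristic polynomial $x^n+c_1x^{n-1}+\dots+c_n$ a power of an irreducible polynomial. For $f(x)=\gamma_0x^m+\dots+\gamma_m$, a sequence $(a_q,\dots,a_r)$ is $f$-recurrent if $\gamma_0a_{l+m}+\dots+\gamma_ma_l=0$ for $q\le l\le r-m$. For a nonidentity involution, $k$ is a fixed element with $k=-\bar k\ne0$. *)

theory Defs
  imports "Jordan_Normal_Form.Determinant" "HOL-Computational_Algebra.Polynomial"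
    "HOL-Computational_Algebra.Polynomial_Factorial"
begin

definition is_involution :: "('a::field \<Rightarrow> 'a) \<Rightarrow> bool" where
  "is_involution inv_f \<longleftrightarrow>
     (\<forall>a b. inv_f (a + b) = inv_f a + inv_f b) \<and>
     (\<forall>a b. inv_f (a * b) = inv_f a * inv_f b) \<and>
     (\<forall>a. inv_f (inv_f a) = a)"

definition star_mat :: "('a \<Rightarrow> 'a) \<Rightarrow> 'a mat \<Rightarrow> 'a mat" where
  "star_mat inv_f M = transpose_mat (map_mat inv_f M)"

text \<open>For f = a_0 x^n + ... + a_n (a_n = constant term),
  f^vee(x) = inv_f(a_n)^{-1} (inv_f(a_n) x^n + ... + inv_f(a_1) x + inv_f(a_0)).\<close>
definition dual_poly :: "('a::field \<Rightarrow> 'a) \<Rightarrow> 'a poly \<Rightarrow> 'a poly" where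
  "dual_poly inv_f f = smult (inverse (inv_f (coeff f 0))) (map_poly inv_f (reflect_poly f))"

text \<open>Frobenius block of a monic polynomial chi = x^n + c_1 x^(n-1) + ... + c_n:
  ones on the subdiagonal, last column (-c_n,...,-c_1)^T, zeros elsewhere (0-indexed).\<close>
definition frobenius_block :: "'a::field poly \<Rightarrow> 'a mat" where
  "frobenius_block chi = mat (degree chi) (degree chi)
     (\<lambda>(i, j). if j = degree chi - 1 then - coeff chi i
               else if i = j + 1 then 1 else 0)"

definition recurrent :: "'a::field poly \<Rightarrow> (int \<Rightarrow> 'a) \<Rightarrow> int \<Rightarrow> int \<Rightarrow> bool" where
  "recurrent f a q r \<longleftrightarrow>
     (\<forall>l. q \<le> l \<and> l \<le> r - int (degree f) \<longrightarrow>
        (\<Sum>i\<le>degree f. coeff f i * a (l + int i)) = 0)"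

definition herm_solution :: "('a::field \<Rightarrow> 'a) \<Rightarrow> 'a \<Rightarrow> nat \<Rightarrow> 'a mat \<Rightarrow> 'a mat \<Rightarrow> bool" where
  "herm_solution inv_f eps n Phi X \<longleftrightarrow>
     X \<in> carrier_mat n n \<and> det X \<noteq> 0 \<and>
     X = eps \<cdot>\<^sub>m star_mat inv_f X \<and> X = star_mat inv_f Phi * X * Phi"

definition toeplitz_mat :: "nat \<Rightarrow> (int \<Rightarrow> 'a) \<Rightarrow> 'a mat" where
  "toeplitz_mat n a = mat n n (\<lambda>(i, j). a (int j - int i))"

definition fragment_works ::
  "('a::field \<Rightarrow> 'a) \<Rightarrow> 'a \<Rightarrow> 'a poly \<Rightarrow> 'a mat \<Rightarrow> nat \<Rightarrow> (int \<Rightarrow> 'a) \<Rightarrow> bool" where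
  "fragment_works inv_f eps chi Phi m v \<longleftrightarrow>
     (let n = degree chi in
       (\<exists>a. recurrent chi a (1 - int n) (int n - 1) \<and> (\<forall>i. - int m \<le> i \<and> i \<le> int m \<longrightarrow> a i = v i)) \<and>
       (\<forall>a. recurrent chi a (1 - int n) (int n - 1) \<and> (\<forall>i. - int m \<le> i \<and> i \<le> int m \<longrightarrow> a i = v i)
          \<longrightarrow> herm_solution inv_f eps n Phi (toeplitz_mat n a)))"

end

theory Submission
  imports Defs
begin

text \<open>
  A solution of \<open>X = \<Phi>\<^sup>* X \<Phi>\<close> is a Toeplitz matrix \<open>[a\<^sub>j\<^sub>-\<^sub>i]\<close> whose entries satisfy the
  \<open>\<chi>\<close>-recurrence. Hermitian symmetry, the corner entry and nonsingularity then make the defect of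
  \<open>\<chi> = \<chi>\<^sup>\<or>\<close> a vanishing kernel vector, which gives (C1); for \<open>\<chi> = (x + \<alpha>)\<^sup>n\<close>,
  \<open>f = id\<close> and \<open>\<epsilon> = (-1)\<^sup>n\<close> the coefficients of \<open>(x + \<alpha>)\<^sup>n\<^sup>-\<^sup>1\<close> form a kernel vector, which
  gives (C2). Conversely, under (C1) the Toeplitz matrix of every \<open>\<chi>\<close>-recurrent sequence
  satisfies \<open>X = \<Phi>\<^sup>* X \<Phi>\<close>, and hermitian symmetry propagates from any fragment of length
  \<open>\<ge> n\<close> because the conjugate reverse of the sequence is again \<open>\<chi>\<close>-recurrent. For
  nonsingularity: a kernel vector of a singular \<open>[a\<^sub>j\<^sub>-\<^sub>i]\<close> is a polynomial of degree \<open>< n\<close>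
  annihilating \<open>a\<close>, so the annihilator ideal contains \<open>p\<^sup>s\<^sup>-\<^sup>1\<close>; this shorter recurrence,
  read on the central window, contradicts the end values of each of the fragments (a)--(d).
\<close>

section \<open>Involutions, Frobenius blocks and Toeplitz matrices\<close>

lemma involution_simps:
  assumes "is_involution f"
  shows "f 0 = 0" "f 1 = 1" "f (- x) = - f x" "f (x + y) = f x + f y" "f (x - y) = f x - f y"
    "f (x * y) = f x * f y" "f (f x) = x"
proof -
  have add: "\<And>a b. f (a + b) = f a + f b" and mult: "\<And>a b. f (a * b) = f a * f b"
    and invol: "\<And>a. f (f a) = a"
    using assms unfolding is_involution_def by auto
  show zero: "f 0 = 0" using add[of 0 0] by (metis add_cancel_right_right)
  have "f 1 \<noteq> 0" using invol[of 1] zero by auto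
  then show "f 1 = 1" using mult[of 1 1] by simp
  have neg: "f (- u) = - f u" for u
    using add[of "- u" u] zero by (simp add: eq_neg_iff_add_eq_0)
  then show "f (- x) = - f x" .
  show "f (x - y) = f x - f y" using add[of x "- y"] neg[of y] by simp
qed (use assms in \<open>auto simp: is_involution_def\<close>)

lemma involution_sum:
  assumes "is_involution f"
  shows "f (sum g A) = (\<Sum>x\<in>A. f (g x))"
  by (induction A rule: infinite_finite_induct) (simp_all add: involution_simps[OF assms])

lemma is_involution_id: "is_involution id"
  unfolding is_involution_def by simp

lemma involution_skew_element_exists:
  assumes "is_involution f" and "f \<noteq> id"
  obtains k where "k = - f k" and "k \<noteq> 0"
proof -
  obtain b where "f b \<noteq> b" using assms(2) by (metis eq_id_iff)
  then show thesis
    by (intro that[of "b - f b"]) (simp_all add: involution_simps[OF assms(1)])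
qed

lemma frobenius_block_carrier: "frobenius_block chi \<in> carrier_mat (degree chi) (degree chi)"
  unfolding frobenius_block_def by simp

lemma frobenius_block_index:
  "i < degree chi \<Longrightarrow> j < degree chi \<Longrightarrow> frobenius_block chi $$ (i, j) =
     (if j = degree chi - 1 then - coeff chi i else if i = j + 1 then 1 else 0)"
  unfolding frobenius_block_def by simp

lemma star_mat_carrier: "A \<in> carrier_mat n n \<Longrightarrow> star_mat f A \<in> carrier_mat n n"
  unfolding star_mat_def by simp

lemma toeplitz_mat_carrier: "toeplitz_mat n a \<in> carrier_mat n n"
  unfolding toeplitz_mat_def by simp

lemma toeplitz_mat_index: "i < n \<Longrightarrow> j < n \<Longrightarrow> toeplitz_mat n a $$ (i, j) = a (int j - int i)"
  unfolding toeplitz_mat_def by simp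

lemma mult_frobenius_block_index:
  assumes X: "X \<in> carrier_mat (degree chi) (degree chi)" and i: "i < degree chi" and j: "j < degree chi"
  shows "(X * frobenius_block chi) $$ (i, j) = (if j = degree chi - 1
    then - (\<Sum>l<degree chi. X $$ (i, l) * coeff chi l) else X $$ (i, j + 1))"
proof -
  let ?n = "degree chi"
  have "(X * frobenius_block chi) $$ (i, j) = (\<Sum>l<?n. X $$ (i, l) *
      (if j = ?n - 1 then - coeff chi l else if l = j + 1 then 1 else 0))"
    using X i j frobenius_block_carrier[of chi]
    by (auto simp: scalar_prod_def frobenius_block_index atLeast0LessThan intro!: sum.cong)
  also have "\<dots> = (if j = ?n - 1 then - (\<Sum>l<?n. X $$ (i, l) * coeff chi l) else X $$ (i, j + 1))"
    using j by (auto simp: sum_negf if_distrib[where f = "\<lambda>x. _ * x"] cong: if_cong)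
  finally show ?thesis .
qed

lemma star_frobenius_block_mult_index:
  assumes inv: "is_involution f" and Y: "Y \<in> carrier_mat (degree chi) (degree chi)"
    and i: "i < degree chi" and j: "j < degree chi"
  shows "(star_mat f (frobenius_block chi) * Y) $$ (i, j) = (if i = degree chi - 1
    then - (\<Sum>k<degree chi. f (coeff chi k) * Y $$ (k, j)) else Y $$ (i + 1, j))"
proof -
  let ?n = "degree chi"
  have "(star_mat f (frobenius_block chi) * Y) $$ (i, j) = (\<Sum>k<?n.
      (if i = ?n - 1 then - f (coeff chi k) else if k = i + 1 then 1 else 0) * Y $$ (k, j))"
    using Y i j frobenius_block_carrier[of chi] unfolding star_mat_def
    by (auto simp: scalar_prod_def frobenius_block_index involution_simps[OF inv]
        atLeast0LessThan intro!: sum.cong)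
  also have "\<dots> = (if i = ?n - 1 then - (\<Sum>k<?n. f (coeff chi k) * Y $$ (k, j)) else Y $$ (i + 1, j))"
    using i by (auto simp: sum_negf if_distrib[where f = "\<lambda>x. x * _"] cong: if_cong)
  finally show ?thesis .
qed

lemma toeplitz_mult_vec_index:
  "i < n \<Longrightarrow> (toeplitz_mat n a *\<^sub>v vec n y) $ i = (\<Sum>j<n. a (int j - int i) * y j)"
  by (simp add: toeplitz_mat_def scalar_prod_def atLeast0LessThan)

lemma det_toeplitz_eq_0_iff:
  fixes a :: "int \<Rightarrow> 'a::field"
  shows "det (toeplitz_mat n a) = 0 \<longleftrightarrow>
     (\<exists>y. (\<exists>j<n. y j \<noteq> 0) \<and> (\<forall>i<n. (\<Sum>j<n. a (int j - int i) * y j) = 0))"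
proof -
  have kernel: "toeplitz_mat n a *\<^sub>v vec n y = 0\<^sub>v n \<longleftrightarrow> (\<forall>i<n. (\<Sum>j<n. a (int j - int i) * y j) = 0)"
    for y
  proof -
    have "toeplitz_mat n a *\<^sub>v vec n y = 0\<^sub>v n \<longleftrightarrow> (\<forall>i<n. (toeplitz_mat n a *\<^sub>v vec n y) $ i = 0)"
      by (auto simp: vec_eq_iff toeplitz_mat_def)
    then show ?thesis by (simp add: toeplitz_mult_vec_index)
  qed
  have nonzero: "vec n y \<noteq> 0\<^sub>v n \<longleftrightarrow> (\<exists>j<n. y j \<noteq> 0)" for y
    by (auto simp: vec_eq_iff)
  have "det (toeplitz_mat n a) = 0 \<longleftrightarrow>
      (\<exists>v. v \<in> carrier_vec n \<and> v \<noteq> 0\<^sub>v n \<and> toeplitz_mat n a *\<^sub>v v = 0\<^sub>v n)"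
    by (rule det_0_iff_vec_prod_zero[OF toeplitz_mat_carrier])
  also have "\<dots> \<longleftrightarrow> (\<exists>y. vec n y \<noteq> 0\<^sub>v n \<and> toeplitz_mat n a *\<^sub>v vec n y = 0\<^sub>v n)"
  proof (intro iffI; elim exE conjE)
    fix v :: "'a vec" assume "v \<in> carrier_vec n" "v \<noteq> 0\<^sub>v n" "toeplitz_mat n a *\<^sub>v v = 0\<^sub>v n"
    moreover have "vec n (($) v) = v" using \<open>v \<in> carrier_vec n\<close> by (intro eq_vecI) auto
    ultimately show "\<exists>y. vec n y \<noteq> 0\<^sub>v n \<and> toeplitz_mat n a *\<^sub>v vec n y = 0\<^sub>v n" by metis
  qed (use vec_carrier in blast)
  finally show ?thesis unfolding kernel nonzero .
qed

section \<open>Linear recurrences\<close>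

lemma sum_atMost_split_last: "(\<Sum>i\<le>n::nat. g i) = (\<Sum>i<n. g i) + (g n :: 'b::comm_monoid_add)"
  using sum.lessThan_Suc[of g n] by (simp add: lessThan_Suc_atMost)

lemma recurrent_forward:
  assumes rec: "recurrent chi a q r" and mon: "lead_coeff chi = 1" and dn: "degree chi = n"
    and l: "q \<le> l" "l + int n \<le> r"
  shows "a (l + int n) = - (\<Sum>i<n. coeff chi i * a (l + int i))"
proof -
  have "(\<Sum>i\<le>n. coeff chi i * a (l + int i)) = 0"
    using rec l dn unfolding recurrent_def by auto
  then show ?thesis using mon dn by (simp add: sum_atMost_split_last eq_neg_iff_add_eq_0 add.commute)
qed

lemma recurrent_backward:
  assumes rec: "recurrent chi a q r" and dn: "degree chi = n" and l: "q \<le> l" "l + int n \<le> r"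
  shows "coeff chi 0 * a l = - (\<Sum>i<n. coeff chi (Suc i) * a (l + int (Suc i)))"
proof -
  have "(\<Sum>i\<le>n. coeff chi i * a (l + int i)) = 0"
    using rec l dn unfolding recurrent_def by auto
  then show ?thesis by (simp add: sum.atMost_shift eq_neg_iff_add_eq_0)
qed

lemma recurrent_diff:
  "recurrent chi a q r \<Longrightarrow> recurrent chi b q r \<Longrightarrow> recurrent chi (\<lambda>x. a x - b x) q r"
  unfolding recurrent_def by (simp add: algebra_simps sum_subtractf)

text \<open>A recurrence with invertible constant term can be run backwards as well as forwards.\<close>

lemma recurrent_vanishes:
  assumes mon: "lead_coeff chi = 1" and dn: "degree chi = n" and c0: "coeff chi 0 \<noteq> 0"
    and rec: "recurrent chi d q r" and s: "q \<le> s" "s + int n \<le> r + 1"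
    and init: "\<And>x. s \<le> x \<Longrightarrow> x < s + int n \<Longrightarrow> d x = 0"
    and x: "q \<le> x" "x \<le> r"
  shows "d x = 0"
proof -
  have up: "d x = 0" if "s \<le> x" "x \<le> r" for x
    using that
  proof (induction "nat (x - s)" arbitrary: x rule: less_induct)
    case less
    show ?case
    proof (cases "x < s + int n")
      case False
      have "d ((x - int n) + int n) = - (\<Sum>i<n. coeff chi i * d ((x - int n) + int i))"
        by (rule recurrent_forward[OF rec mon dn]) (use less.prems s False in auto)
      moreover have "(\<Sum>i<n. coeff chi i * d ((x - int n) + int i)) = 0"
        by (intro sum.neutral ballI) (use less False s in \<open>auto intro!: less.hyps\<close>)
      ultimately show ?thesis by simp
    qed (use init less.prems in auto)
  qed
  have down: "d x = 0" if "q \<le> x" "x < s" for x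
    using that
  proof (induction "nat (s - x)" arbitrary: x rule: less_induct)
    case less
    have "coeff chi 0 * d x = - (\<Sum>i<n. coeff chi (Suc i) * d (x + int (Suc i)))"
      by (rule recurrent_backward[OF rec dn]) (use less.prems s in auto)
    moreover have "(\<Sum>i<n. coeff chi (Suc i) * d (x + int (Suc i))) = 0"
    proof (intro sum.neutral ballI)
      fix i assume "i \<in> {..<n}"
      then have "d (x + int (Suc i)) = 0"
        using less.hyps[of "x + int (Suc i)"] less.prems init[of "x + int (Suc i)"] up[of "x + int (Suc i)"] s
        by (cases "x + int (Suc i) < s") auto
      then show "coeff chi (Suc i) * d (x + int (Suc i)) = 0" by simp
    qed
    ultimately show ?case using c0 by simp
  qed
  show ?thesis using up down x by (cases "s \<le> x") auto
qed

lemma recurrent_unique: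
  assumes mon: "lead_coeff chi = 1" and dn: "degree chi = n" and c0: "coeff chi 0 \<noteq> 0"
    and rec_a: "recurrent chi a q r" and rec_b: "recurrent chi b q r"
    and s: "q \<le> s" "s + int n \<le> r + 1"
    and init: "\<And>x. s \<le> x \<Longrightarrow> x < s + int n \<Longrightarrow> a x = b x"
    and x: "q \<le> x" "x \<le> r"
  shows "a x = b x"
  using recurrent_vanishes[OF mon dn c0 recurrent_diff[OF rec_a rec_b] s _ x] init by simp

text \<open>The linear functional on \<open>K[x]\<close> that vanishes on the ideal \<open>(chi)\<close> and sends
  \<open>x\<^sup>k\<close> to \<open>w (s\<^sub>0 + k)\<close> for \<open>k < deg chi\<close>.\<close>

definition window_functional :: "'a::field poly \<Rightarrow> (int \<Rightarrow> 'a) \<Rightarrow> int \<Rightarrow> 'a poly \<Rightarrow> 'a" where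
  "window_functional chi w s\<^sub>0 g = (\<Sum>k<degree chi. coeff (g mod chi) k * w (s\<^sub>0 + int k))"

lemma window_functional_add:
  "window_functional chi w s\<^sub>0 (g + h) = window_functional chi w s\<^sub>0 g + window_functional chi w s\<^sub>0 h"
  unfolding window_functional_def by (simp add: poly_mod_add_left algebra_simps sum.distrib)

lemma window_functional_diff:
  "window_functional chi w s\<^sub>0 (g - h) = window_functional chi w s\<^sub>0 g - window_functional chi w s\<^sub>0 h"
  unfolding window_functional_def by (simp add: poly_mod_diff_left algebra_simps sum_subtractf)

lemma window_functional_smult:
  "window_functional chi w s\<^sub>0 (smult c g) = c * window_functional chi w s\<^sub>0 g"
  unfolding window_functional_def by (simp add: mod_smult_left sum_distrib_left algebra_simps)

lemma window_functional_sum: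
  "window_functional chi w s\<^sub>0 (\<Sum>i\<in>A. g i) = (\<Sum>i\<in>A. window_functional chi w s\<^sub>0 (g i))"
proof (induction A rule: infinite_finite_induct)
  case (insert x F) then show ?case by (simp add: window_functional_add)
qed (simp_all add: window_functional_def)

lemma window_functional_mod:
  "g mod chi = h mod chi \<Longrightarrow> window_functional chi w s\<^sub>0 g = window_functional chi w s\<^sub>0 h"
  unfolding window_functional_def by simp

lemma window_functional_mult_self: "window_functional chi w s\<^sub>0 (h * chi) = 0"
  unfolding window_functional_def by simp

lemma window_functional_monom_less:
  assumes "t < degree chi"
  shows "window_functional chi w s\<^sub>0 (monom 1 t) = w (s\<^sub>0 + int t)"
proof -
  have "monom 1 t mod chi = (monom 1 t :: 'a poly)"
    using assms by (intro mod_poly_less) (simp add: degree_monom_eq)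
  then show ?thesis
    using assms by (simp add: window_functional_def coeff_monom if_distrib[where f = "\<lambda>x. x * _"]
        cong: if_cong)
qed

lemma window_functional_monom_degree:
  assumes mon: "lead_coeff chi = 1" and dn: "degree chi = n"
  shows "window_functional chi w s\<^sub>0 (monom 1 n) = - (\<Sum>i<n. coeff chi i * w (s\<^sub>0 + int i))"
proof -
  have "monom 1 n = chi - (\<Sum>i<n. smult (coeff chi i) (monom 1 i))"
    using poly_as_sum_of_monoms[of chi] mon dn by (simp add: sum_atMost_split_last smult_monom algebra_simps)
  then have "window_functional chi w s\<^sub>0 (monom 1 n) =
      - (\<Sum>i<n. coeff chi i * window_functional chi w s\<^sub>0 (monom 1 i))"
    using window_functional_mult_self[of chi w s\<^sub>0 1]
    by (simp add: window_functional_diff window_functional_sum window_functional_smult)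
  then show ?thesis using dn by (simp add: window_functional_monom_less)
qed

text \<open>When the constant term of \<open>chi\<close> is invertible, so is \<open>x\<close> modulo \<open>chi\<close>; this gives
  all integer powers of \<open>x\<close> in \<open>K[x]/(chi)\<close>.\<close>

definition x_inverse_mod :: "'a::field poly \<Rightarrow> 'a poly" where
  "x_inverse_mod chi = smult (- inverse (coeff chi 0)) (\<Sum>i<degree chi. monom (coeff chi (Suc i)) i)"

definition x_power_mod :: "'a::field poly \<Rightarrow> int \<Rightarrow> 'a poly" where
  "x_power_mod chi t = (if t \<ge> 0 then monom 1 (nat t) else x_inverse_mod chi ^ nat (- t))"

lemma x_times_x_inverse_mod:
  assumes c0: "coeff chi 0 \<noteq> 0"
  shows "monom 1 1 * x_inverse_mod chi = 1 - smult (inverse (coeff chi 0)) chi"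
proof -
  have "chi = (\<Sum>i\<le>degree chi. monom (coeff chi i) i)" by (simp add: poly_as_sum_of_monoms)
  also have "\<dots> = [:coeff chi 0:] + monom 1 1 * (\<Sum>i<degree chi. monom (coeff chi (Suc i)) i)"
    by (simp add: sum.atMost_shift sum_distrib_left mult_monom monom_0)
  finally have split: "chi = [:coeff chi 0:] + monom 1 1 * (\<Sum>i<degree chi. monom (coeff chi (Suc i)) i)" .
  show ?thesis unfolding x_inverse_mod_def
    by (subst (2) split) (simp add: c0 algebra_simps smult_add_right flip: mult_smult_right)
qed

lemma x_power_mod_Suc:
  assumes c0: "coeff chi 0 \<noteq> 0"
  shows "(monom 1 1 * x_power_mod chi t) mod chi = x_power_mod chi (t + 1) mod chi"
proof (cases "t \<ge> 0")
  case True then show ?thesis by (simp add: x_power_mod_def mult_monom nat_add_distrib add.commute)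
next
  case False
  define k where "k = nat (- t - 1)"
  have t: "nat (- t) = Suc k" using False unfolding k_def by auto
  have "monom 1 1 * x_power_mod chi t = (monom 1 1 * x_inverse_mod chi) * x_inverse_mod chi ^ k"
    using False t by (simp add: x_power_mod_def mult.assoc)
  also have "\<dots> = (1 - smult (inverse (coeff chi 0)) chi) * x_inverse_mod chi ^ k"
    by (simp only: x_times_x_inverse_mod[OF c0])
  also have "\<dots> = x_inverse_mod chi ^ k - smult (inverse (coeff chi 0)) (x_inverse_mod chi ^ k) * chi"
    by (simp add: algebra_simps)
  finally have "(monom 1 1 * x_power_mod chi t) mod chi = x_inverse_mod chi ^ k mod chi"
    by (simp add: poly_mod_diff_left mod_smult_left)
  moreover have "x_power_mod chi (t + 1) = x_inverse_mod chi ^ k"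
    using False unfolding x_power_mod_def k_def by (auto simp: nat_diff_distrib)
  ultimately show ?thesis by simp
qed

lemma x_power_mod_add:
  assumes c0: "coeff chi 0 \<noteq> 0"
  shows "(monom 1 i * x_power_mod chi t) mod chi = x_power_mod chi (t + int i) mod chi"
proof (induction i)
  case (Suc i)
  have "(monom 1 (Suc i) * x_power_mod chi t) mod chi = (monom 1 1 * (monom 1 i * x_power_mod chi t)) mod chi"
    by (simp add: mult_monom mult.assoc[symmetric])
  also have "\<dots> = (monom 1 1 * x_power_mod chi (t + int i)) mod chi"
    by (metis Suc.IH mod_mult_right_eq)
  also have "\<dots> = x_power_mod chi (t + int (Suc i)) mod chi"
    using x_power_mod_Suc[OF c0, of "t + int i"] by (simp add: ac_simps)
  finally show ?case .
qed (simp add: monom_0)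

text \<open>The unique \<open>chi\<close>-recurrent sequence on all of \<open>\<int>\<close> with \<open>n\<close> prescribed consecutive values
  \<open>w s\<^sub>0, \<dots>, w (s\<^sub>0 + n - 1)\<close>.\<close>

definition recurrent_extension :: "'a::field poly \<Rightarrow> (int \<Rightarrow> 'a) \<Rightarrow> int \<Rightarrow> int \<Rightarrow> 'a" where
  "recurrent_extension chi w s\<^sub>0 x = window_functional chi w s\<^sub>0 (x_power_mod chi (x - s\<^sub>0))"

lemma recurrent_extension_recurrent:
  assumes c0: "coeff chi 0 \<noteq> 0"
  shows "recurrent chi (recurrent_extension chi w s\<^sub>0) q r"
  unfolding recurrent_def
proof (intro allI impI)
  fix l
  let ?L = "window_functional chi w s\<^sub>0" and ?z = "x_power_mod chi (l - s\<^sub>0)"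
  have "(\<Sum>i\<le>degree chi. coeff chi i * recurrent_extension chi w s\<^sub>0 (l + int i)) =
      (\<Sum>i\<le>degree chi. ?L (monom (coeff chi i) i * ?z))"
  proof (intro sum.cong refl)
    fix i
    have "recurrent_extension chi w s\<^sub>0 (l + int i) = ?L (monom 1 i * ?z)"
      unfolding recurrent_extension_def
      by (rule window_functional_mod) (simp add: x_power_mod_add[OF c0] algebra_simps)
    moreover have "monom (coeff chi i) i * ?z = smult (coeff chi i) (monom 1 i * ?z)"
      by (metis mult_smult_left smult_monom mult.right_neutral)
    ultimately show "coeff chi i * recurrent_extension chi w s\<^sub>0 (l + int i) =
        ?L (monom (coeff chi i) i * ?z)"
      by (simp add: window_functional_smult)
  qed
  also have "\<dots> = ?L ((\<Sum>i\<le>degree chi. monom (coeff chi i) i) * ?z)"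
    by (simp add: window_functional_sum sum_distrib_right)
  also have "\<dots> = 0"
    using window_functional_mult_self[of chi w s\<^sub>0 ?z] by (simp add: poly_as_sum_of_monoms mult.commute)
  finally show "(\<Sum>i\<le>degree chi. coeff chi i * recurrent_extension chi w s\<^sub>0 (l + int i)) = 0" .
qed

lemma recurrent_extension_initial:
  "0 \<le> t \<Longrightarrow> t < int (degree chi) \<Longrightarrow> recurrent_extension chi w s\<^sub>0 (s\<^sub>0 + t) = w (s\<^sub>0 + t)"
  using window_functional_monom_less[of "nat t" chi w s\<^sub>0]
  unfolding recurrent_extension_def x_power_mod_def by simp

lemma recurrent_extension_next:
  "lead_coeff chi = 1 \<Longrightarrow> degree chi = n \<Longrightarrow>
    recurrent_extension chi w s\<^sub>0 (s\<^sub>0 + int n) = - (\<Sum>i<n. coeff chi i * w (s\<^sub>0 + int i))"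
  using window_functional_monom_degree[of chi n w s\<^sub>0]
  unfolding recurrent_extension_def x_power_mod_def by simp

lemma recurrent_extension_eq:
  assumes mon: "lead_coeff chi = 1" and dn: "degree chi = n" and c0: "coeff chi 0 \<noteq> 0"
    and rec: "recurrent chi a (1 - int n) (int n - 1)" and x: "1 - int n \<le> x" "x \<le> int n - 1"
  shows "recurrent_extension chi a (1 - int n) x = a x"
proof (rule recurrent_unique[OF mon dn c0 recurrent_extension_recurrent[OF c0] rec])
  fix y assume "1 - int n \<le> y" "y < 1 - int n + int n"
  then show "recurrent_extension chi a (1 - int n) y = a y"
    using recurrent_extension_initial[of "y - (1 - int n)" chi a "1 - int n"] dn by simp
qed (use x in auto)

lemma window_functional_monom:
  assumes mon: "lead_coeff chi = 1" and dn: "degree chi = n" and c0: "coeff chi 0 \<noteq> 0"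
    and rec: "recurrent chi a (1 - int n) (int n - 1)" and n: "n \<ge> 1" and t: "t \<le> 2 * n - 2"
  shows "window_functional chi a (1 - int n) (monom 1 t) = a (1 - int n + int t)"
proof -
  have "window_functional chi a (1 - int n) (monom 1 t) = recurrent_extension chi a (1 - int n) (1 - int n + int t)"
    by (simp add: recurrent_extension_def x_power_mod_def)
  also have "\<dots> = a (1 - int n + int t)"
    by (rule recurrent_extension_eq[OF mon dn c0 rec]) (use n t in auto)
  finally show ?thesis .
qed

lemma window_functional_monom_mult:
  assumes mon: "lead_coeff chi = 1" and dn: "degree chi = n" and c0: "coeff chi 0 \<noteq> 0"
    and rec: "recurrent chi a (1 - int n) (int n - 1)" and n: "n \<ge> 1" and l: "l + degree h \<le> 2 * n - 2"
  shows "window_functional chi a (1 - int n) (monom 1 l * h) =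
    (\<Sum>k\<le>degree h. coeff h k * a (1 - int n + int l + int k))"
proof -
  have "monom 1 l * h = (\<Sum>k\<le>degree h. smult (coeff h k) (monom 1 (l + k)))"
    by (subst poly_as_sum_of_monoms[of h, symmetric]) (simp add: sum_distrib_left mult_monom smult_monom)
  then have "window_functional chi a (1 - int n) (monom 1 l * h) =
      (\<Sum>k\<le>degree h. coeff h k * window_functional chi a (1 - int n) (monom 1 (l + k)))"
    by (simp add: window_functional_sum window_functional_smult)
  also have "\<dots> = (\<Sum>k\<le>degree h. coeff h k * a (1 - int n + int l + int k))"
    using l by (intro sum.cong refl) (simp add: window_functional_monom[OF mon dn c0 rec n] algebra_simps)
  finally show ?thesis .
qed

section \<open>Toeplitz matrices of recurrent sequences\<close>

lemma sum_atMost_reverse: "(\<Sum>i\<le>n::nat. g (n - i)) = (\<Sum>i\<le>n. g i)"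
  using sum.atLeastAtMost_rev[of g 0 n] by (simp add: atLeast0AtMost)

lemma reciprocal_coeff:
  assumes "\<And>k. k \<le> n \<Longrightarrow> f (coeff chi (n - k)) = f (coeff chi 0) * coeff chi k" and "k \<le> n"
  shows "f (coeff chi k) = f (coeff chi 0) * coeff chi (n - k)"
  using assms(1)[of "n - k"] assms(2) by simp

lemma reciprocal_constant_coeff:
  assumes inv: "is_involution f" and mon: "lead_coeff chi = 1" and dn: "degree chi = n"
    and reciprocal: "\<And>k. k \<le> n \<Longrightarrow> f (coeff chi (n - k)) = f (coeff chi 0) * coeff chi k"
  shows "f (coeff chi 0) * coeff chi 0 = 1"
  using reciprocal[of 0] mon dn involution_simps[OF inv] by simp

lemma frobenius_sandwich_index:
  assumes inv: "is_involution f" and dn: "degree chi = n" and X: "X \<in> carrier_mat n n"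
    and i: "i < n" and j: "j < n"
  shows "(star_mat f (frobenius_block chi) * X * frobenius_block chi) $$ (i, j) =
    (if i = n - 1 then - (\<Sum>k<n. f (coeff chi k) * (X * frobenius_block chi) $$ (k, j))
     else (X * frobenius_block chi) $$ (i + 1, j))"
proof -
  have P: "frobenius_block chi \<in> carrier_mat n n" using frobenius_block_carrier[of chi] dn by simp
  have "(star_mat f (frobenius_block chi) * X * frobenius_block chi) $$ (i, j) =
      (star_mat f (frobenius_block chi) * (X * frobenius_block chi)) $$ (i, j)"
    by (simp add: assoc_mult_mat[OF star_mat_carrier[OF P] X P])
  then show ?thesis
    using star_frobenius_block_mult_index[OF inv, of "X * frobenius_block chi" chi i j] i j dn
      mult_carrier_mat[OF X P] by simp
qed

lemma toeplitz_mult_frobenius_block_index: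
  assumes mon: "lead_coeff chi = 1" and dn: "degree chi = n"
    and rec: "recurrent chi b (1 - int n) (int n)" and k: "k < n" and j: "j < n"
  shows "(toeplitz_mat n b * frobenius_block chi) $$ (k, j) = b (int j + 1 - int k)"
proof (cases "j = n - 1")
  case True
  have "(\<Sum>l<n. toeplitz_mat n b $$ (k, l) * coeff chi l) = (\<Sum>l<n. coeff chi l * b (- int k + int l))"
    using k by (intro sum.cong refl) (simp add: toeplitz_mat_index algebra_simps)
  also have "\<dots> = - b (- int k + int n)"
    using recurrent_forward[OF rec mon dn, of "- int k"] k by simp
  finally show ?thesis
    using k j True mult_frobenius_block_index[of "toeplitz_mat n b" chi k j] dn
    by (simp add: toeplitz_mat_carrier algebra_simps)
next
  case False
  then show ?thesis
    using k j mult_frobenius_block_index[of "toeplitz_mat n b" chi k j] dn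
    by (simp add: toeplitz_mat_carrier toeplitz_mat_index algebra_simps)
qed

text \<open>Under (C1) the conjugated coefficients of \<open>chi\<close> are those of \<open>chi\<close> reversed, up to the
  factor \<open>f (chi 0)\<close>, so they run the recurrence backwards.\<close>

lemma reciprocal_recurrence_backward:
  assumes inv: "is_involution f" and mon: "lead_coeff chi = 1" and dn: "degree chi = n"
    and reciprocal: "\<And>k. k \<le> n \<Longrightarrow> f (coeff chi (n - k)) = f (coeff chi 0) * coeff chi k"
    and rec: "recurrent chi b q r" and l: "q \<le> l" "l + int n \<le> r"
  shows "(\<Sum>k<n. f (coeff chi k) * b (l + int n - int k)) = - b l"
proof -
  have "(\<Sum>k<n. f (coeff chi k) * b (l + int n - int k)) =
      f (coeff chi 0) * (\<Sum>k<n. coeff chi (n - k) * b (l + int n - int k))"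
    unfolding sum_distrib_left
  proof (intro sum.cong refl)
    fix k assume "k \<in> {..<n}"
    then have "f (coeff chi k) = f (coeff chi 0) * coeff chi (n - k)"
      by (intro reciprocal_coeff[OF reciprocal]) auto
    then show "f (coeff chi k) * b (l + int n - int k) = f (coeff chi 0) * (coeff chi (n - k) * b (l + int n - int k))"
      by simp
  qed
  also have "(\<Sum>k<n. coeff chi (n - k) * b (l + int n - int k)) = (\<Sum>i<n. coeff chi (Suc i) * b (l + int (Suc i)))"
    by (subst sum.nat_diff_reindex[symmetric]) (intro sum.cong refl, auto simp: of_nat_diff Suc_diff_Suc)
  also have "\<dots> = - (coeff chi 0 * b l)"
    using recurrent_backward[OF rec dn l] by simp
  finally show ?thesis
    using reciprocal_constant_coeff[OF inv mon dn reciprocal] by (simp add: algebra_simps)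
qed

lemma toeplitz_frobenius_invariant:
  assumes inv: "is_involution f" and mon: "lead_coeff chi = 1" and dn: "degree chi = n"
    and reciprocal: "\<And>k. k \<le> n \<Longrightarrow> f (coeff chi (n - k)) = f (coeff chi 0) * coeff chi k"
    and rec: "recurrent chi b (1 - int n) (int n)"
  shows "toeplitz_mat n b = star_mat f (frobenius_block chi) * toeplitz_mat n b * frobenius_block chi"
proof (rule eq_matI)
  fix i j assume "i < dim_row (star_mat f (frobenius_block chi) * toeplitz_mat n b * frobenius_block chi)"
    and "j < dim_col (star_mat f (frobenius_block chi) * toeplitz_mat n b * frobenius_block chi)"
  then have i: "i < n" and j: "j < n" using dn by (simp_all add: star_mat_def frobenius_block_def)
  have "(\<Sum>k<n. f (coeff chi k) * b (int j + 1 - int k)) = - b (int j + 1 - int n)"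
    using reciprocal_recurrence_backward[OF inv mon dn reciprocal rec, of "int j + 1 - int n"] j
    by (simp add: algebra_simps)
  then show "toeplitz_mat n b $$ (i, j) =
      (star_mat f (frobenius_block chi) * toeplitz_mat n b * frobenius_block chi) $$ (i, j)"
    using frobenius_sandwich_index[OF inv dn toeplitz_mat_carrier i j] i j
      toeplitz_mult_frobenius_block_index[OF mon dn rec] by (simp add: toeplitz_mat_index algebra_simps)
qed (use dn in \<open>simp_all add: star_mat_def toeplitz_mat_def frobenius_block_def\<close>)

lemma toeplitz_frobenius_invariant_window:
  assumes inv: "is_involution f" and mon: "lead_coeff chi = 1" and dn: "degree chi = n"
    and reciprocal: "\<And>k. k \<le> n \<Longrightarrow> f (coeff chi (n - k)) = f (coeff chi 0) * coeff chi k"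
    and rec: "recurrent chi a (1 - int n) (int n - 1)"
  shows "toeplitz_mat n a = star_mat f (frobenius_block chi) * toeplitz_mat n a * frobenius_block chi"
proof -
  have c0: "coeff chi 0 \<noteq> 0"
    using reciprocal_constant_coeff[OF inv mon dn reciprocal] by auto
  have "toeplitz_mat n a = toeplitz_mat n (recurrent_extension chi a (1 - int n))"
    by (rule eq_matI) (auto simp: toeplitz_mat_def recurrent_extension_eq[OF mon dn c0 rec])
  then show ?thesis
    using toeplitz_frobenius_invariant[OF inv mon dn reciprocal recurrent_extension_recurrent[OF c0]]
    by simp
qed

lemma toeplitz_hermitian_iff:
  "toeplitz_mat n a = eps \<cdot>\<^sub>m star_mat f (toeplitz_mat n a) \<longleftrightarrow>
    (\<forall>t. \<bar>t\<bar> \<le> int n - 1 \<longrightarrow> a (- t) = eps * f (a t))"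
proof -
  have "toeplitz_mat n a = eps \<cdot>\<^sub>m star_mat f (toeplitz_mat n a) \<longleftrightarrow>
      (\<forall>i<n. \<forall>j<n. a (- (int i - int j)) = eps * f (a (int i - int j)))"
    by (auto simp: mat_eq_iff toeplitz_mat_def star_mat_def)
  also have "\<dots> \<longleftrightarrow> (\<forall>t. \<bar>t\<bar> \<le> int n - 1 \<longrightarrow> a (- t) = eps * f (a t))"
  proof (intro iffI allI impI)
    fix t :: int assume all: "\<forall>i<n. \<forall>j<n. a (- (int i - int j)) = eps * f (a (int i - int j))"
      and t: "\<bar>t\<bar> \<le> int n - 1"
    then show "a (- t) = eps * f (a t)"
      using all[rule_format, of "nat (max t 0)" "nat (max (- t) 0)"] by (cases "t \<ge> 0") auto
  next
    fix i j assume all: "\<forall>t. \<bar>t\<bar> \<le> int n - 1 \<longrightarrow> a (- t) = eps * f (a t)" and "i < n" "j < n"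
    then have "\<bar>int i - int j\<bar> \<le> int n - 1" by auto
    then show "a (- (int i - int j)) = eps * f (a (int i - int j))" by (rule all[rule_format])
  qed
  finally show ?thesis .
qed

lemma frobenius_invariant_index:
  assumes inv: "is_involution f" and dn: "degree chi = n" and X: "X \<in> carrier_mat n n"
    and eq: "X = star_mat f (frobenius_block chi) * X * frobenius_block chi"
    and i: "i < n" and j: "j < n"
  shows "X $$ (i, j) = (if i = n - 1 then - (\<Sum>k<n. f (coeff chi k) * (X * frobenius_block chi) $$ (k, j))
    else (X * frobenius_block chi) $$ (i + 1, j))"
  using frobenius_sandwich_index[OF inv dn X i j] arg_cong[OF eq, of "\<lambda>M. M $$ (i, j)"] by simp

lemma frobenius_invariant_is_toeplitz:
  assumes inv: "is_involution f" and dn: "degree chi = n" and X: "X \<in> carrier_mat n n"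
    and eq: "X = star_mat f (frobenius_block chi) * X * frobenius_block chi"
  obtains a where "X = toeplitz_mat n a"
proof -
  have shift: "X $$ (i, j) = X $$ (i + 1, j + 1)" if "i < n - 1" "j < n - 1" for i j
    using frobenius_invariant_index[OF inv dn X eq, of i j] that
      mult_frobenius_block_index[of X chi "i + 1" j] X dn by simp
  define a where "a t = (if t \<ge> 0 then X $$ (0, nat t) else X $$ (nat (- t), 0))" for t :: int
  have "X $$ (i, j) = a (int j - int i)" if "i < n" "j < n" for i j
    using that
  proof (induction i arbitrary: j)
    case (Suc i)
    show ?case
    proof (cases j)
      case (Suc j')
      then show ?thesis using shift[of i j'] Suc.IH[of j'] Suc.prems by simp
    qed (simp add: a_def flip: of_nat_Suc)
  qed (simp add: a_def)
  then have "X = toeplitz_mat n a"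
    using X by (intro eq_matI) (auto simp: toeplitz_mat_def)
  then show thesis by (rule that)
qed

lemma toeplitz_frobenius_invariant_recurrent:
  assumes inv: "is_involution f" and mon: "lead_coeff chi = 1" and dn: "degree chi = n" and n: "n \<ge> 1"
    and eq: "toeplitz_mat n a = star_mat f (frobenius_block chi) * toeplitz_mat n a * frobenius_block chi"
  shows "recurrent chi a (1 - int n) (int n - 1)"
    and "a 0 = (\<Sum>k<n. f (coeff chi k) * (\<Sum>l<n. a (int l - int k) * coeff chi l))"
proof -
  let ?X = "toeplitz_mat n a" and ?P = "frobenius_block chi"
  have last_col: "(?X * ?P) $$ (k, n - 1) = - (\<Sum>l<n. a (int l - int k) * coeff chi l)" if "k < n" for k
    using mult_frobenius_block_index[of ?X chi k "n - 1"] that n dn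
    by (simp add: toeplitz_mat_carrier toeplitz_mat_index)
  note entry = frobenius_invariant_index[OF inv dn toeplitz_mat_carrier eq]
  show "recurrent chi a (1 - int n) (int n - 1)"
    unfolding recurrent_def
  proof (intro allI impI)
    fix l assume l: "1 - int n \<le> l \<and> l \<le> int n - 1 - int (degree chi)"
    define i where "i = nat (- l) - 1"
    have i: "i < n - 1" "l = - int i - 1" using l dn unfolding i_def by auto
    have "l + int n = int (n - 1) - int i" using i n by auto
    then have "a (l + int n) = ?X $$ (i, n - 1)" using i(1) by (simp only:) (simp add: toeplitz_mat_index)
    also have "\<dots> = - (\<Sum>k<n. a (int k - int (i + 1)) * coeff chi k)"
      using entry[of i "n - 1"] last_col[of "i + 1"] i by simp
    also have "\<dots> = - (\<Sum>k<n. coeff chi k * a (l + int k))"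
      unfolding i(2) by (simp add: algebra_simps)
    finally show "(\<Sum>k\<le>degree chi. coeff chi k * a (l + int k)) = 0"
      using mon dn by (simp add: sum_atMost_split_last)
  qed
  have "a 0 = ?X $$ (n - 1, n - 1)" using n by (simp add: toeplitz_mat_index)
  also have "\<dots> = - (\<Sum>k<n. f (coeff chi k) * (?X * ?P) $$ (k, n - 1))"
    using entry[of "n - 1" "n - 1"] n by simp
  also have "\<dots> = (\<Sum>k<n. f (coeff chi k) * (\<Sum>l<n. a (int l - int k) * coeff chi l))"
    unfolding sum_negf[symmetric] by (intro sum.cong refl) (use last_col in simp)
  finally show "a 0 = (\<Sum>k<n. f (coeff chi k) * (\<Sum>l<n. a (int l - int k) * coeff chi l))" .
qed

lemma conj_reverse_recurrence:
  assumes inv: "is_involution f" and dn: "degree chi = n" and rec: "recurrent chi a q r"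
    and l: "- r \<le> l" "l + int n \<le> - q"
  shows "(\<Sum>j\<le>n. f (coeff chi (n - j)) * f (a (- l - int j))) = 0"
proof -
  have "(\<Sum>j\<le>n. coeff chi (n - j) * a (- l - int j)) =
      (\<Sum>j\<le>n. (\<lambda>i. coeff chi i * a ((- l - int n) + int i)) (n - j))"
    by (intro sum.cong refl) (simp add: of_nat_diff)
  also have "\<dots> = (\<Sum>i\<le>n. coeff chi i * a ((- l - int n) + int i))"
    by (rule sum_atMost_reverse)
  also have "\<dots> = 0" using rec l dn unfolding recurrent_def by auto
  finally show ?thesis
    using involution_sum[OF inv, of "\<lambda>j. coeff chi (n - j) * a (- l - int j)" "{..n}"]
    by (simp add: involution_simps[OF inv])
qed

lemma sum_lessThan_split_first:
  "0 < n \<Longrightarrow> (\<Sum>i<n. g i) = g 0 + (\<Sum>i\<in>{1..<n::nat}. g i :: 'a::comm_monoid_add)"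
  by (metis One_nat_def atLeast0LessThan sum.atLeast_Suc_lessThan)

text \<open>The defect of (C1) is a kernel vector of \<open>[a\<^sub>j\<^sub>-\<^sub>i]\<close>: rows \<open>i > 0\<close> follow from the
  hermitian symmetry and the recurrence, row \<open>0\<close> from the corner entry of \<open>X = \<Phi>\<^sup>* X \<Phi>\<close>.\<close>

lemma toeplitz_kernel_reciprocity_defect:
  assumes inv: "is_involution f" and mon: "lead_coeff chi = 1" and dn: "degree chi = n" and n: "n \<ge> 1"
    and rec: "recurrent chi a (1 - int n) (int n - 1)"
    and sym: "\<And>t. \<bar>t\<bar> \<le> int n - 1 \<Longrightarrow> a (- t) = eps * f (a t)"
    and corner: "a 0 = (\<Sum>k<n. f (coeff chi k) * (\<Sum>l<n. a (int l - int k) * coeff chi l))"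
    and i: "i < n"
  shows "(\<Sum>j<n. a (int j - int i) * (f (coeff chi (n - j)) - f (coeff chi 0) * coeff chi j)) = 0"
proof (cases "i = 0")
  case False
  have "(\<Sum>j\<le>n. f (coeff chi (n - j)) * a (int j - int i)) =
      eps * (\<Sum>j\<le>n. f (coeff chi (n - j)) * f (a (- (- int i) - int j)))"
    unfolding sum_distrib_left
    by (intro sum.cong refl) (use i False in \<open>simp add: sym[of "int i - int _", simplified]\<close>)
  also have "\<dots> = 0"
    using conj_reverse_recurrence[OF inv dn rec, of "- int i"] i False by simp
  finally have "(\<Sum>j<n. f (coeff chi (n - j)) * a (int j - int i)) = - f (coeff chi 0) * a (- int i + int n)"
    by (simp add: sum_atMost_split_last eq_neg_iff_add_eq_0 algebra_simps)
  moreover have "a (- int i + int n) = - (\<Sum>j<n. coeff chi j * a (- int i + int j))"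
    by (rule recurrent_forward[OF rec mon dn]) (use i False in auto)
  ultimately show ?thesis by (simp add: algebra_simps sum_subtractf sum_distrib_left)
next
  case True
  have "(\<Sum>k\<in>{1..<n}. f (coeff chi k) * (\<Sum>l<n. a (int l - int k) * coeff chi l)) =
      - (\<Sum>k\<in>{1..<n}. f (coeff chi k) * a (int n - int k))"
    unfolding sum_negf[symmetric]
  proof (intro sum.cong refl)
    fix k assume "k \<in> {1..<n}"
    then have "a (- int k + int n) = - (\<Sum>l<n. coeff chi l * a (- int k + int l))"
      by (intro recurrent_forward[OF rec mon dn]) auto
    then show "f (coeff chi k) * (\<Sum>l<n. a (int l - int k) * coeff chi l) = - (f (coeff chi k) * a (int n - int k))"
      by (simp add: algebra_simps)
  qed
  then have "a 0 = f (coeff chi 0) * (\<Sum>l<n. a (int l) * coeff chi l) - (\<Sum>k\<in>{1..<n}. f (coeff chi k) * a (int n - int k))"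
    using corner sum_lessThan_split_first[of n "\<lambda>k. f (coeff chi k) * (\<Sum>l<n. a (int l - int k) * coeff chi l)"] n
    by simp
  moreover have "(\<Sum>k\<in>{1..<n}. f (coeff chi k) * a (int n - int k)) = (\<Sum>j\<in>{1..<n}. f (coeff chi (n - j)) * a (int j))"
    by (subst sum.atLeastLessThan_rev) (intro sum.cong refl, auto simp: of_nat_diff)
  moreover have "f (coeff chi n) = 1" using mon dn involution_simps[OF inv] by simp
  ultimately show ?thesis
    using True n by (simp add: sum_lessThan_split_first algebra_simps sum_subtractf sum_distrib_left)
qed

lemma hermitian_toeplitz_reciprocal:
  assumes inv: "is_involution f" and mon: "lead_coeff chi = 1" and dn: "degree chi = n" and n: "n \<ge> 1"
    and rec: "recurrent chi a (1 - int n) (int n - 1)"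
    and sym: "\<And>t. \<bar>t\<bar> \<le> int n - 1 \<Longrightarrow> a (- t) = eps * f (a t)"
    and corner: "a 0 = (\<Sum>k<n. f (coeff chi k) * (\<Sum>l<n. a (int l - int k) * coeff chi l))"
    and det: "det (toeplitz_mat n a) \<noteq> 0" and k: "k \<le> n"
  shows "f (coeff chi (n - k)) = f (coeff chi 0) * coeff chi k"
proof (cases "k = n")
  case False
  let ?y = "\<lambda>j. f (coeff chi (n - j)) - f (coeff chi 0) * coeff chi j"
  have "\<not> (\<exists>j<n. ?y j \<noteq> 0)"
  proof
    assume "\<exists>j<n. ?y j \<noteq> 0"
    then have "det (toeplitz_mat n a) = 0"
      unfolding det_toeplitz_eq_0_iff
      using toeplitz_kernel_reciprocity_defect[OF inv mon dn n rec sym corner] by (intro exI[of _ ?y]) simp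
    then show False using det by simp
  qed
  then show ?thesis using False k by simp
qed (use mon dn involution_simps[OF inv] in simp)

lemma herm_solution_necessary:
  assumes inv: "is_involution f" and mon: "lead_coeff chi = 1" and dn: "degree chi = n" and n: "n \<ge> 1"
    and sol: "herm_solution f eps n (frobenius_block chi) X"
  obtains a where "recurrent chi a (1 - int n) (int n - 1)"
    and "\<And>t. \<bar>t\<bar> \<le> int n - 1 \<Longrightarrow> a (- t) = eps * f (a t)"
    and "det (toeplitz_mat n a) \<noteq> 0"
    and "\<And>k. k \<le> n \<Longrightarrow> f (coeff chi (n - k)) = f (coeff chi 0) * coeff chi k"
proof -
  have X: "X \<in> carrier_mat n n" and det: "det X \<noteq> 0" and herm: "X = eps \<cdot>\<^sub>m star_mat f X"
    and inv_eq: "X = star_mat f (frobenius_block chi) * X * frobenius_block chi"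
    using sol unfolding herm_solution_def by auto
  obtain a where Xa: "X = toeplitz_mat n a"
    using frobenius_invariant_is_toeplitz[OF inv dn X inv_eq] .
  note rec = toeplitz_frobenius_invariant_recurrent[OF inv mon dn n inv_eq[unfolded Xa]]
  have sym: "\<And>t. \<bar>t\<bar> \<le> int n - 1 \<Longrightarrow> a (- t) = eps * f (a t)"
    using herm unfolding Xa toeplitz_hermitian_iff by blast
  show thesis
    using that[OF rec(1) sym] det hermitian_toeplitz_reciprocal[OF inv mon dn n rec(1) sym rec(2)]
    unfolding Xa by blast
qed

lemma dual_poly_fixed_iff:
  assumes inv: "is_involution f" and mon: "lead_coeff chi = 1" and dn: "degree chi = n"
  shows "coeff chi 0 \<noteq> 0 \<and> chi = dual_poly f chi \<longleftrightarrow>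
    (\<forall>k\<le>n. f (coeff chi (n - k)) = f (coeff chi 0) * coeff chi k)"
proof -
  note f_simps = involution_simps[OF inv]
  have dual: "coeff (dual_poly f chi) k =
      (if k \<le> n then inverse (f (coeff chi 0)) * f (coeff chi (n - k)) else 0)" for k
    unfolding dual_poly_def using dn by (simp add: coeff_map_poly f_simps coeff_reflect_poly)
  show ?thesis
  proof (intro iffI allI impI)
    fix k assume "coeff chi 0 \<noteq> 0 \<and> chi = dual_poly f chi" and "k \<le> n"
    moreover from this have "f (coeff chi 0) \<noteq> 0" by (metis f_simps(1,7))
    ultimately show "f (coeff chi (n - k)) = f (coeff chi 0) * coeff chi k"
      using dual[of k] by (metis field_class.field_divide_inverse nonzero_eq_divide_eq mult.commute)
  next
    assume reciprocal: "\<forall>k\<le>n. f (coeff chi (n - k)) = f (coeff chi 0) * coeff chi k"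
    then have unit: "f (coeff chi 0) * coeff chi 0 = 1"
      using reciprocal_constant_coeff[OF inv mon dn] by blast
    then have "f (coeff chi 0) \<noteq> 0" by auto
    have "coeff chi k = coeff (dual_poly f chi) k" for k
      using reciprocal \<open>f (coeff chi 0) \<noteq> 0\<close> dual[of k] dn by (cases "k \<le> n") (auto simp: coeff_eq_0)
    then show "coeff chi 0 \<noteq> 0 \<and> chi = dual_poly f chi"
      using unit by (auto intro: poly_eqI)
  qed
qed

lemma recurrent_conj_reverse:
  assumes inv: "is_involution f" and mon: "lead_coeff chi = 1" and dn: "degree chi = n"
    and reciprocal: "\<And>k. k \<le> n \<Longrightarrow> f (coeff chi (n - k)) = f (coeff chi 0) * coeff chi k"
    and rec: "recurrent chi a q r"
  shows "recurrent chi (\<lambda>y. eps * f (a (- y))) (- r) (- q)"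
  unfolding recurrent_def
proof (intro allI impI)
  fix l assume l: "- r \<le> l \<and> l \<le> - q - int (degree chi)"
  have "f (coeff chi 0) * (\<Sum>j\<le>n. coeff chi j * f (a (- l - int j))) =
      (\<Sum>j\<le>n. f (coeff chi (n - j)) * f (a (- l - int j)))"
    unfolding sum_distrib_left by (intro sum.cong refl) (simp add: reciprocal)
  also have "\<dots> = 0" using conj_reverse_recurrence[OF inv dn rec, of l] l dn by simp
  finally have "(\<Sum>j\<le>n. coeff chi j * f (a (- l - int j))) = 0"
    using reciprocal_constant_coeff[OF inv mon dn reciprocal] by auto
  then show "(\<Sum>j\<le>degree chi. coeff chi j * (eps * f (a (- (l + int j))))) = 0"
    using dn by (simp add: sum_distrib_left[symmetric] algebra_simps)
qed

text \<open>The conjugate reverse \<open>y \<mapsto> \<epsilon> f (a (-y))\<close> is \<open>chi\<close>-recurrent as well and agrees with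
  \<open>a\<close> on \<open>n\<close> consecutive places.\<close>

lemma hermitian_symmetry_extends:
  assumes inv: "is_involution f" and mon: "lead_coeff chi = 1" and dn: "degree chi = n"
    and reciprocal: "\<And>k. k \<le> n \<Longrightarrow> f (coeff chi (n - k)) = f (coeff chi 0) * coeff chi k"
    and rec: "recurrent chi a (1 - int n) (int n - 1)"
    and m: "n \<le> 2 * m + 1" "m < n"
    and sym: "\<And>t. \<bar>t\<bar> \<le> int m \<Longrightarrow> a (- t) = eps * f (a t)"
    and t: "\<bar>t\<bar> \<le> int n - 1"
  shows "a (- t) = eps * f (a t)"
proof -
  have c0: "coeff chi 0 \<noteq> 0"
    using reciprocal_constant_coeff[OF inv mon dn reciprocal] by auto
  have "a (- t) = eps * f (a (- (- t)))"
  proof (rule recurrent_unique[OF mon dn c0 rec _, where s = "- int m"])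
    show "recurrent chi (\<lambda>y. eps * f (a (- y))) (1 - int n) (int n - 1)"
      using recurrent_conj_reverse[OF inv mon dn reciprocal rec, of eps] by simp
    fix y assume "- int m \<le> y" "y < - int m + int n"
    then show "a y = eps * f (a (- y))" using sym[of "- y"] m by simp
  qed (use m t in auto)
  then show ?thesis by simp
qed

lemma recurrent_extension_fragment:
  assumes mon: "lead_coeff chi = 1" and dn: "degree chi = n" and m: "n \<le> 2 * m + 1" "2 * m \<le> n"
    and consistent: "2 * m = n \<Longrightarrow> (\<Sum>i\<le>n. coeff chi i * v (- int m + int i)) = 0"
    and i: "- int m \<le> i" "i \<le> int m"
  shows "recurrent_extension chi v (- int m) i = v i"
proof (cases "i < - int m + int n")
  case True
  then show ?thesis
    using recurrent_extension_initial[of "i + int m" chi v "- int m"] i dn by simp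
next
  case False
  then have i_eq: "i = - int m + int n" and "2 * m = n" using i m by auto
  have "recurrent_extension chi v (- int m) i = - (\<Sum>i<n. coeff chi i * v (- int m + int i))"
    unfolding i_eq by (rule recurrent_extension_next[OF mon dn])
  also have "\<dots> = v i"
    using consistent[OF \<open>2 * m = n\<close>] mon dn i_eq by (simp add: sum_atMost_split_last add_eq_0_iff2)
  finally show ?thesis .
qed

lemma fragment_worksI:
  assumes inv: "is_involution f" and mon: "lead_coeff chi = 1" and dn: "degree chi = n" and n: "n \<ge> 1"
    and reciprocal: "\<And>k. k \<le> n \<Longrightarrow> f (coeff chi (n - k)) = f (coeff chi 0) * coeff chi k"
    and m: "n \<le> 2 * m + 1" "2 * m \<le> n"
    and sym: "\<And>t. \<bar>t\<bar> \<le> int m \<Longrightarrow> v (- t) = eps * f (v t)"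
    and consistent: "2 * m = n \<Longrightarrow> (\<Sum>i\<le>n. coeff chi i * v (- int m + int i)) = 0"
    and nonsingular: "\<And>a. recurrent chi a (1 - int n) (int n - 1) \<Longrightarrow>
        (\<forall>i. - int m \<le> i \<and> i \<le> int m \<longrightarrow> a i = v i) \<Longrightarrow> det (toeplitz_mat n a) \<noteq> 0"
  shows "fragment_works f eps chi (frobenius_block chi) m v"
proof -
  have c0: "coeff chi 0 \<noteq> 0"
    using reciprocal_constant_coeff[OF inv mon dn reciprocal] by auto
  have "herm_solution f eps n (frobenius_block chi) (toeplitz_mat n a)"
    if rec: "recurrent chi a (1 - int n) (int n - 1)"
      and agree: "\<forall>i. - int m \<le> i \<and> i \<le> int m \<longrightarrow> a i = v i" for a
  proof -
    have sym_fragment: "a (- t) = eps * f (a t)" if "\<bar>t\<bar> \<le> int m" for t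
    proof -
      have "a (- t) = v (- t)" and "a t = v t" using agree that by (auto simp: abs_le_iff)
      then show ?thesis using sym[OF that] by simp
    qed
    have "a (- t) = eps * f (a t)" if "\<bar>t\<bar> \<le> int n - 1" for t
      by (rule hermitian_symmetry_extends[OF inv mon dn reciprocal rec _ _ sym_fragment that])
        (use m n in auto)
    then have "toeplitz_mat n a = eps \<cdot>\<^sub>m star_mat f (toeplitz_mat n a)"
      unfolding toeplitz_hermitian_iff by blast
    then show ?thesis
      unfolding herm_solution_def
      using toeplitz_mat_carrier nonsingular[OF rec agree]
        toeplitz_frobenius_invariant_window[OF inv mon dn reciprocal rec] by (intro conjI)
  qed
  moreover have "recurrent chi (recurrent_extension chi v (- int m)) (1 - int n) (int n - 1)"
    by (rule recurrent_extension_recurrent[OF c0])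
  ultimately show ?thesis
    unfolding fragment_works_def Let_def dn
    using recurrent_extension_fragment[OF mon dn m consistent] by blast
qed

section \<open>Singular Toeplitz matrices\<close>

lemma prime_elem_power_dvd_unit:
  fixes p d :: "'a::{idom, algebraic_semidom}"
  assumes p: "prime_elem p" and dvd: "d dvd p ^ s" and not_dvd: "\<not> p dvd d"
  shows "is_unit d"
  using dvd
proof (induction s)
  case (Suc s)
  then obtain e where e: "p * p ^ s = d * e" by (auto elim: dvdE)
  then have "p dvd d * e" by (metis dvd_triv_left)
  then have "p dvd e" using p not_dvd prime_elem_dvd_mult_iff by blast
  then obtain e' where "e = p * e'" by (auto elim: dvdE)
  then have "p ^ s = d * e'" using e p by (simp add: prime_elem_def mult.left_commute)
  then show ?case by (intro Suc.IH) simp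
qed simp

lemma dvd_prime_elem_power_degree_less:
  fixes p d :: "'a::field poly"
  assumes p: "prime_elem p"
  shows "d dvd p ^ s \<Longrightarrow> degree d < degree (p ^ s) \<Longrightarrow> d dvd p ^ (s - 1)"
proof (induction s arbitrary: d)
  case (Suc s)
  have p0: "p \<noteq> 0" using p by (simp add: prime_elem_def)
  show ?case
  proof (cases "p dvd d")
    case False
    then show ?thesis using prime_elem_power_dvd_unit[OF p Suc.prems(1)] by (simp add: unit_imp_dvd)
  next
    case True
    then obtain d' where d': "d = p * d'" by (auto elim: dvdE)
    then have "d' dvd p ^ s" "d' \<noteq> 0" using Suc.prems(1) p0 by auto
    moreover from this have "degree d' < degree (p ^ s)"
      using Suc.prems(2) d' p0 by (simp add: degree_mult_eq degree_power_eq)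
    ultimately have "d' dvd p ^ (s - 1)" "s \<noteq> 0" using Suc.IH by (auto intro: Nat.gr0I)
    then show ?thesis using d' by (cases s) auto
  qed
qed simp

text \<open>An element of least degree divides \<open>chi\<close>.\<close>

lemma poly_ideal_has_small_divisor:
  fixes P :: "'a::field poly \<Rightarrow> bool"
  assumes mult: "\<And>g h. P g \<Longrightarrow> P (h * g)" and diff: "\<And>g h. P g \<Longrightarrow> P h \<Longrightarrow> P (g - h)"
    and chi: "P chi" and y: "P y" "y \<noteq> 0"
  obtains d where "P d" "d \<noteq> 0" "d dvd chi" "degree d \<le> degree y"
proof -
  define m where "m = (LEAST m. \<exists>g. P g \<and> g \<noteq> 0 \<and> degree g = m)"
  obtain d where d: "P d" "d \<noteq> 0" "degree d = m"
    using LeastI_ex[of "\<lambda>m. \<exists>g. P g \<and> g \<noteq> 0 \<and> degree g = m"] y unfolding m_def by blast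
  have least: "m \<le> degree g" if "P g" "g \<noteq> 0" for g
    unfolding m_def using that by (intro Least_le) blast
  have "P (chi mod d)"
    using diff[OF chi mult[OF d(1), of "chi div d"]] by (metis minus_div_mult_eq_mod)
  then have "chi mod d = 0"
    using least[of "chi mod d"] degree_mod_less'[OF d(2)] d(3) by (meson leD)
  then show thesis
    using that[OF d(1,2)] least[OF y] d(3) by (simp add: mod_eq_0_iff_dvd)
qed

lemma toeplitz_singular_of_annihilator:
  fixes h :: "'a::field poly"
  assumes h: "h \<noteq> 0" "degree h < n"
    and annih: "\<And>i. i < n \<Longrightarrow> (\<Sum>k<n. coeff h k * a (int k - int i)) = 0"
  shows "det (toeplitz_mat n a) = 0"
proof -
  have "\<exists>j<n. coeff h j \<noteq> 0" using h leading_coeff_neq_0 by blast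
  then show ?thesis
    unfolding det_toeplitz_eq_0_iff using annih by (intro exI[of _ "coeff h"]) (simp add: mult.commute)
qed

lemma window_functional_mult_eq_0:
  assumes mon: "lead_coeff chi = 1" and dn: "degree chi = n"
    and low: "\<And>l. l < n \<Longrightarrow> window_functional chi w s\<^sub>0 (monom 1 l * y) = 0"
  shows "window_functional chi w s\<^sub>0 (g * y) = 0"
proof -
  let ?L = "window_functional chi w s\<^sub>0" and ?r = "g mod chi"
  have "?L (g * y) = ?L (?r * y)"
    by (rule window_functional_mod) (simp add: mod_mult_left_eq)
  also have "?r * y = (\<Sum>l\<le>degree ?r. smult (coeff ?r l) (monom 1 l * y))"
    by (subst poly_as_sum_of_monoms[of ?r, symmetric], unfold sum_distrib_right, intro sum.cong refl)
      (metis mult_smult_left smult_monom mult.right_neutral)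
  also have "?L \<dots> = 0"
  proof (cases "?r = 0")
    case False
    moreover have "chi \<noteq> 0" using mon by auto
    ultimately have "degree ?r < n" using degree_mod_less' dn by blast
    then show ?thesis by (simp add: window_functional_sum window_functional_smult low)
  qed (simp add: window_functional_def)
  finally show ?thesis .
qed

text \<open>A kernel vector of a singular Toeplitz matrix is the coefficient vector of a nonzero
  polynomial of degree \<open>< n\<close> annihilating the sequence.\<close>

lemma singular_toeplitz_annihilator:
  assumes mon: "lead_coeff chi = 1" and dn: "degree chi = n" and c0: "coeff chi 0 \<noteq> 0" and n: "n \<ge> 1"
    and rec: "recurrent chi a (1 - int n) (int n - 1)" and det: "det (toeplitz_mat n a) = 0"
  obtains y where "y \<noteq> 0" "degree y < n" "\<And>g. window_functional chi a (1 - int n) (g * y) = 0"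
proof -
  obtain v where v: "\<exists>j<n. v j \<noteq> 0" and kernel: "\<And>i. i < n \<Longrightarrow> (\<Sum>j<n. a (int j - int i) * v j) = 0"
    using det unfolding det_toeplitz_eq_0_iff by blast
  define y where "y = Poly (map v [0..<n])"
  have coeff_y: "coeff y k = (if k < n then v k else 0)" for k
    unfolding y_def by (simp add: nth_default_def)
  have deg_y: "degree y < n" using n by (intro degree_lessI) (auto simp: coeff_y)
  have v_high: "v k = 0" if "degree y < k" "k < n" for k
    using coeff_y[of k] coeff_eq_0[OF that(1)] that(2) by simp
  have "window_functional chi a (1 - int n) (monom 1 l * y) = 0" if l: "l < n" for l
  proof -
    have "window_functional chi a (1 - int n) (monom 1 l * y) =
        (\<Sum>k\<le>degree y. coeff y k * a (1 - int n + int l + int k))"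
      by (rule window_functional_monom_mult[OF mon dn c0 rec n]) (use l deg_y in auto)
    also have "\<dots> = (\<Sum>k<n. a (int k - int (n - 1 - l)) * v k)"
      by (rule sum.mono_neutral_cong_left)
        (use l deg_y v_high in \<open>auto simp: coeff_y of_nat_diff algebra_simps\<close>)
    also have "\<dots> = 0" using kernel[of "n - 1 - l"] l by linarith
    finally show ?thesis .
  qed
  moreover have "y \<noteq> 0" using v coeff_y by (metis coeff_0)
  ultimately show thesis using that deg_y window_functional_mult_eq_0[OF mon dn] by blast
qed

text \<open>Hence the annihilator ideal of the sequence contains a proper divisor of \<open>chi = p\<^sup>s\<close>, and
  so \<open>p\<^sup>s\<^sup>-\<^sup>1\<close>.\<close>

lemma singular_toeplitz_recurrent:
  fixes p :: "'a::field poly"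
  assumes mon: "lead_coeff chi = 1" and dn: "degree chi = n" and c0: "coeff chi 0 \<noteq> 0"
    and n: "n \<ge> 1" and chi: "chi = p ^ s" and p: "prime_elem p"
    and rec: "recurrent chi a (1 - int n) (int n - 1)" and det: "det (toeplitz_mat n a) = 0"
  shows "recurrent (p ^ (s - 1)) a (1 - int n) (int n - 1)"
proof -
  let ?L = "window_functional chi a (1 - int n)"
  define P where "P g \<longleftrightarrow> (\<forall>h. ?L (h * g) = 0)" for g
  obtain y where "y \<noteq> 0" "degree y < n" "P y"
    using singular_toeplitz_annihilator[OF mon dn c0 n rec det] unfolding P_def by blast
  moreover have "P chi" unfolding P_def by (simp add: window_functional_mult_self)
  moreover have "P (h * g)" if "P g" for g h
    using that unfolding P_def by (metis mult.assoc)
  moreover have "P (g - h)" if "P g" "P h" for g h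
    using that unfolding P_def by (simp add: right_diff_distrib window_functional_diff)
  ultimately obtain d where "P d" "d dvd p ^ s" "degree d < degree (p ^ s)"
    using poly_ideal_has_small_divisor[of P chi y] chi dn by (metis le_less_trans)
  then have "P (p ^ (s - 1))"
    using dvd_prime_elem_power_degree_less[OF p] unfolding P_def by (metis dvdE mult.assoc mult.commute)
  then show ?thesis
    unfolding recurrent_def
  proof (intro allI impI)
    fix l assume l: "1 - int n \<le> l \<and> l \<le> int n - 1 - int (degree (p ^ (s - 1)))"
    then have "nat (l - (1 - int n)) + degree (p ^ (s - 1)) \<le> 2 * n - 2" by linarith
    then have "(\<Sum>k\<le>degree (p ^ (s - 1)). coeff (p ^ (s - 1)) k * a (l + int k)) =
        ?L (monom 1 (nat (l - (1 - int n))) * p ^ (s - 1))"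
      using window_functional_monom_mult[OF mon dn c0 rec n, of "nat (l - (1 - int n))" "p ^ (s - 1)"] l
      by simp
    then show "(\<Sum>k\<le>degree (p ^ (s - 1)). coeff (p ^ (s - 1)) k * a (l + int k)) = 0"
      using \<open>P (p ^ (s - 1))\<close> unfolding P_def by simp
  qed
qed

section \<open>The identity involution\<close>

lemma irreducible_degree_pos:
  fixes p :: "'a::field poly"
  assumes "irreducible p"
  shows "degree p \<ge> 1"
  using assms is_unit_iff_degree[of p] by (auto simp: irreducible_def)

lemma irreducible_root_degree:
  fixes p :: "'a::field poly"
  assumes "irreducible p" and "poly p x = 0"
  shows "degree p = 1"
  using assms irreducible_degree_pos[OF assms(1)] root_imp_reducible_poly[of p x] by linarith

lemma monic_degree_one_eq:
  assumes "lead_coeff p = 1" and "degree p = 1"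
  shows "p = [:coeff p 0, 1:]"
  using assms by (intro poly_eqI) (auto simp: coeff_eq_0 coeff_pCons split: nat.splits)

lemma monic_degree_two_eq:
  assumes "lead_coeff p = 1" and "degree p = 2"
  shows "p = [:coeff p 0, coeff p 1, 1:]"
proof (rule poly_eqI)
  fix k show "coeff p k = coeff [:coeff p 0, coeff p 1, 1:] k"
    using assms by (cases k; cases "k - 1") (auto simp: coeff_eq_0 coeff_pCons numeral_2_eq_2 split: nat.splits)
qed

lemma reciprocal_id_reflect_poly:
  assumes mon: "lead_coeff chi = 1" and dn: "degree chi = n"
    and reciprocal: "\<And>k. k \<le> n \<Longrightarrow> coeff chi (n - k) = coeff chi 0 * coeff chi k"
  shows "reflect_poly chi = smult (coeff chi 0) chi"
proof (rule poly_eqI)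
  fix k show "coeff (reflect_poly chi) k = coeff (smult (coeff chi 0) chi) k"
    using reciprocal[of k] dn by (cases "k \<le> n") (auto simp: coeff_reflect_poly coeff_eq_0)
qed

lemma reciprocal_id_linear_power:
  fixes \<alpha> :: "'a::field"
  assumes mon: "lead_coeff chi = 1" and dn: "degree chi = n" and n: "n \<ge> 1"
    and reciprocal: "\<And>k. k \<le> n \<Longrightarrow> coeff chi (n - k) = coeff chi 0 * coeff chi k"
    and chi: "chi = [:\<alpha>, 1:] ^ s"
  shows "\<alpha> * \<alpha> = 1"
proof -
  have unit: "coeff chi 0 * coeff chi 0 = 1" using reciprocal[of 0] mon dn by simp
  have s: "s \<noteq> 0" using chi dn n by (cases s) auto
  have "coeff chi 0 = \<alpha> ^ s" using chi by (simp add: coeff_0_power)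
  then have \<alpha>: "\<alpha> \<noteq> 0" using unit s by (cases s) auto
  define y where "y = - inverse \<alpha>"
  have "poly (reflect_poly chi) y = y ^ degree chi * poly chi (- \<alpha>)"
    using poly_reflect_poly_nz[of y chi] \<alpha> unfolding y_def by (simp add: inverse_minus_eq)
  also have "poly chi (- \<alpha>) = 0" using chi s by simp
  finally have "poly chi y = 0"
    using reciprocal_id_reflect_poly[OF mon dn reciprocal] unit by auto
  then have "\<alpha> = inverse \<alpha>" using chi unfolding y_def by simp
  then show ?thesis using \<alpha> by (metis right_inverse)
qed

lemma linear_power_coeff_reverse:
  fixes \<alpha> :: "'a::field"
  assumes \<alpha>: "\<alpha> * \<alpha> = 1" and k: "k \<le> N"
  shows "coeff ([:\<alpha>, 1:] ^ N) k = \<alpha> ^ N * coeff ([:\<alpha>, 1:] ^ N) (N - k)"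
proof -
  have "reflect_poly [:\<alpha>, 1:] = smult \<alpha> [:\<alpha>, 1:]"
    using \<alpha> by (intro poly_eqI) (auto simp: coeff_reflect_poly coeff_pCons split: nat.splits)
  then have "reflect_poly ([:\<alpha>, 1:] ^ N) = smult (\<alpha> ^ N) ([:\<alpha>, 1:] ^ N)"
    by (simp only: reflect_poly_power smult_power)
  then have "coeff (reflect_poly ([:\<alpha>, 1:] ^ N)) k = coeff (smult (\<alpha> ^ N) ([:\<alpha>, 1:] ^ N)) k" by simp
  then have "coeff ([:\<alpha>, 1:] ^ N) (N - k) = \<alpha> ^ N * coeff ([:\<alpha>, 1:] ^ N) k"
    using k by (simp add: coeff_reflect_poly degree_power_eq)
  moreover have "\<alpha> ^ N * \<alpha> ^ N = 1" using \<alpha> by (metis power_mult_distrib power_one)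
  ultimately show ?thesis by (metis mult.assoc mult_1)
qed

lemma reciprocal_id_quadratic_constant_coeff:
  fixes p :: "'a::field poly"
  assumes mon: "lead_coeff chi = 1" and dn: "degree chi = n" and char2: "(2::'a) \<noteq> 0"
    and reciprocal: "\<And>k. k \<le> n \<Longrightarrow> coeff chi (n - k) = coeff chi 0 * coeff chi k"
    and p: "lead_coeff p = 1" "irreducible p" "degree p = 2"
    and chi: "chi = p ^ s" and s: "s \<ge> 1"
  shows "coeff p 0 ^ (s - 1) \<noteq> -1"
proof
  assume p0: "coeff p 0 ^ (s - 1) = -1"
  let ?p0 = "coeff p 0" and ?p1 = "coeff p 1"
  obtain s' where s': "s = Suc s'" using s by (cases s) auto
  have "coeff chi 0 * coeff chi 0 = 1" using reciprocal[of 0] mon dn by simp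
  moreover have "coeff chi 0 = ?p0 ^ s' * ?p0" unfolding chi coeff_0_power s' by (simp add: mult.commute)
  then have "coeff chi 0 = - ?p0" using p0 s' by simp
  ultimately have "?p0 * ?p0 = 1" by simp
  then have "?p0 = 1 \<or> ?p0 = -1" by (metis square_eq_1_iff power2_eq_square)
  moreover have "?p0 \<noteq> 1" using p0 char2 by (auto simp: eq_neg_iff_add_eq_0)
  ultimately have p_eq: "p = [:-1, ?p1, 1:]" using monic_degree_two_eq[OF p(1,3)] by simp
  have "p dvd smult (coeff chi 0) (p ^ s)" using s' by (intro dvd_smult) simp
  then have "p dvd reflect_poly p ^ s"
    using reciprocal_id_reflect_poly[OF mon dn reciprocal] chi by (simp add: reflect_poly_power)
  then have "p dvd reflect_poly p"
    using field_poly_irreducible_imp_prime[OF p(2)] prime_elem_dvd_power by blast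
  then have "p dvd reflect_poly p + p" by simp
  moreover have "reflect_poly p + p = monom (2 * ?p1) 1"
  proof (rule poly_eqI)
    fix k show "coeff (reflect_poly p + p) k = coeff (monom (2 * ?p1) 1) k"
      by (subst (1 2) p_eq) (cases k; cases "k - 1";
          auto simp: coeff_reflect_poly coeff_monom coeff_eq_0 split: nat.splits)
  qed
  ultimately have "monom (2 * ?p1) 1 = 0"
    using p(3) dvd_imp_degree_le[of p "monom (2 * ?p1) 1"] degree_monom_le[of "2 * ?p1" 1] by force
  then have "poly p 1 = 0" using char2 by (subst p_eq) simp
  then show False using irreducible_root_degree[OF p(2)] p(3) by simp
qed

lemma reciprocal_id_constant_coeff:
  fixes p :: "'a::field poly"
  assumes mon: "lead_coeff chi = 1" and dn: "degree chi = n" and char2: "(2::'a) \<noteq> 0"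
    and reciprocal: "\<And>k. k \<le> n \<Longrightarrow> coeff chi (n - k) = coeff chi 0 * coeff chi k"
    and p: "lead_coeff p = 1" "irreducible p" and chi: "chi = p ^ s" and n: "even n"
  shows "coeff chi 0 \<noteq> -1"
proof
  assume c0: "coeff chi 0 = -1"
  have "poly (reflect_poly chi) 1 = poly chi 1" using poly_reflect_poly_nz[of 1 chi] by simp
  then have "poly chi 1 = - poly chi 1"
    using reciprocal_id_reflect_poly[OF mon dn reciprocal] c0 by simp
  then have "poly p 1 = 0" using char2 chi by (simp add: eq_neg_iff_add_eq_0 flip: mult_2)
  then have p1: "degree p = 1" by (rule irreducible_root_degree[OF p(2)])
  then have "p = [:-1, 1:]"
    using monic_degree_one_eq[OF p(1)] \<open>poly p 1 = 0\<close> by (metis add.right_neutral mult_1 poly_pCons poly_0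
        add_eq_0_iff2)
  moreover have "s = n" using dn chi p1 p(2) by (auto simp: degree_power_eq irreducible_def)
  ultimately have "coeff chi 0 = 1" using chi n by (simp add: coeff_0_power)
  then show False using c0 char2 by (simp add: eq_neg_iff_add_eq_0)
qed

lemma recurrent_linear_factor:
  fixes h :: "'a::field poly"
  assumes rec: "recurrent ([:\<alpha>, 1:] * h) a q r" and h: "h \<noteq> 0"
    and l: "q \<le> l" "l + int (degree h) + 1 \<le> r"
  shows "(\<Sum>k\<le>degree h. coeff h k * a (l + 1 + int k)) = - \<alpha> * (\<Sum>k\<le>degree h. coeff h k * a (l + int k))"
proof -
  let ?d = "degree h"
  have deg: "degree ([:\<alpha>, 1:] * h) = Suc ?d" using h by (subst degree_mult_eq) auto
  have "0 = (\<Sum>k\<le>Suc ?d. coeff ([:\<alpha>, 1:] * h) k * a (l + int k))"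
    using rec l deg unfolding recurrent_def by auto
  also have "\<dots> = \<alpha> * (\<Sum>k\<le>Suc ?d. coeff h k * a (l + int k)) + (\<Sum>k\<le>Suc ?d. coeff (pCons 0 h) k * a (l + int k))"
  proof -
    have "coeff ([:\<alpha>, 1:] * h) k = \<alpha> * coeff h k + coeff (pCons 0 h) k" for k
      by (simp add: mult_pCons_left)
    then show ?thesis by (simp only: distrib_right sum.distrib sum_distrib_left mult.assoc)
  qed
  also have "(\<Sum>k\<le>Suc ?d. coeff h k * a (l + int k)) = (\<Sum>k\<le>?d. coeff h k * a (l + int k))"
    by (simp add: coeff_eq_0)
  also have "(\<Sum>k\<le>Suc ?d. coeff (pCons 0 h) k * a (l + int k)) = (\<Sum>k\<le>?d. coeff h k * a (l + 1 + int k))"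
    by (subst sum.atMost_Suc_shift) (simp add: algebra_simps)
  finally show ?thesis by (simp add: eq_neg_iff_add_eq_0 add.commute)
qed

lemma recurrent_linear_factor_iterate:
  fixes h :: "'a::field poly"
  assumes rec: "recurrent ([:\<alpha>, 1:] * h) a q r" and h: "h \<noteq> 0"
    and l: "q \<le> l" "l + int j + int (degree h) \<le> r"
  shows "(\<Sum>k\<le>degree h. coeff h k * a (l + int j + int k)) = (- \<alpha>) ^ j * (\<Sum>k\<le>degree h. coeff h k * a (l + int k))"
  using l
proof (induction j)
  case (Suc j)
  have "(\<Sum>k\<le>degree h. coeff h k * a (l + int (Suc j) + int k)) =
      (\<Sum>k\<le>degree h. coeff h k * a ((l + int j) + 1 + int k))"
    by (simp add: algebra_simps)
  also have "\<dots> = - \<alpha> * (\<Sum>k\<le>degree h. coeff h k * a (l + int j + int k))"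
    by (rule recurrent_linear_factor[OF rec h]) (use Suc.prems in auto)
  finally show ?case using Suc by simp
qed simp

lemma reverse_window_sum:
  fixes q :: "'a::field poly"
  assumes sym: "\<And>t. \<bar>t\<bar> \<le> int N \<Longrightarrow> a (- t) = eps * a t"
    and rev: "\<And>k. k \<le> N \<Longrightarrow> coeff q k = c * coeff q (N - k)"
  shows "(\<Sum>k\<le>N. coeff q k * a (0 + int k)) = eps * c * (\<Sum>k\<le>N. coeff q k * a (- int N + int k))"
proof -
  have "(\<Sum>k\<le>N. coeff q k * a (0 + int k)) = eps * c * (\<Sum>k\<le>N. coeff q (N - k) * a (- int k))"
    unfolding sum_distrib_left
  proof (intro sum.cong refl)
    fix k assume "k \<in> {..N}"
    then have "a (- (- int k)) = eps * a (- int k)" and "coeff q k = c * coeff q (N - k)"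
      by (intro sym, simp, intro rev, simp)
    then show "coeff q k * a (0 + int k) = eps * c * (coeff q (N - k) * a (- int k))" by simp
  qed
  also have "(\<Sum>k\<le>N. coeff q (N - k) * a (- int k)) = (\<Sum>k\<le>N. coeff q k * a (- int (N - k)))"
    using sum_atMost_reverse[of "\<lambda>k. coeff q k * a (- int (N - k))" N] by simp
  also have "\<dots> = (\<Sum>k\<le>N. coeff q k * a (- int N + int k))" by (intro sum.cong refl) (auto simp: of_nat_diff)
  finally show ?thesis .
qed

text \<open>For \<open>chi = (x + \<alpha>)\<^sup>n\<close> the sequence
  \<open>W l = \<Sum>\<^sub>k q\<^sub>k a (l + k)\<close> with \<open>q = (x + \<alpha>)\<^sup>n\<^sup>-\<^sup>1\<close> is geometric with ratio \<open>-\<alpha>\<close>,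
  while the symmetry \<open>a (-t) = (-1)\<^sup>n a t\<close> forces the opposite sign between its ends;
  hence \<open>W\<close> vanishes and the coefficients of \<open>q\<close> form a kernel vector of the Toeplitz matrix.\<close>

lemma herm_solution_linear_power_impossible:
  fixes \<alpha> :: "'a::field"
  assumes mon: "lead_coeff chi = 1" and dn: "degree chi = n" and n: "n \<ge> 1"
    and char2: "(2::'a) \<noteq> 0" and chi: "chi = [:\<alpha>, 1:] ^ n" and eps: "eps = (-1) ^ n"
    and sol: "herm_solution id eps n (frobenius_block chi) X"
  shows False
proof -
  obtain a where rec: "recurrent chi a (1 - int n) (int n - 1)"
    and sym: "\<And>t. \<bar>t\<bar> \<le> int n - 1 \<Longrightarrow> a (- t) = eps * id (a t)"
    and det: "det (toeplitz_mat n a) \<noteq> 0"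
    and reciprocal: "\<And>k. k \<le> n \<Longrightarrow> id (coeff chi (n - k)) = id (coeff chi 0) * coeff chi k"
    using herm_solution_necessary[OF is_involution_id mon dn n sol] by blast
  note sym = sym[unfolded id_apply] and reciprocal = reciprocal[unfolded id_apply]
  have \<alpha>: "\<alpha> * \<alpha> = 1" by (rule reciprocal_id_linear_power[OF mon dn n reciprocal chi])
  obtain N where N: "n = Suc N" using n by (cases n) auto
  define q where "q = [:\<alpha>, 1:] ^ N"
  have chi_q: "chi = [:\<alpha>, 1:] * q" unfolding chi q_def N by simp
  have q: "q \<noteq> 0" "degree q = N" by (simp_all add: q_def degree_power_eq)
  moreover have "lead_coeff q = 1" by (simp add: q_def lead_coeff_power)
  ultimately have q: "q \<noteq> 0" "degree q = N" "coeff q N = 1" by simp_all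
  have q_sym: "coeff q k = \<alpha> ^ N * coeff q (N - k)" if "k \<le> N" for k
    unfolding q_def by (rule linear_power_coeff_reverse[OF \<alpha> that])
  define W where "W l = (\<Sum>k\<le>N. coeff q k * a (l + int k))" for l
  have geometric: "W (1 - int n + int j) = (- \<alpha>) ^ j * W (1 - int n)" if "j \<le> N" for j
    unfolding W_def using recurrent_linear_factor_iterate[OF rec[unfolded chi_q] q(1), of "1 - int n" j] q that N
    by simp
  have "\<bar>t\<bar> \<le> int N \<Longrightarrow> a (- t) = eps * a t" for t using sym N by simp
  then have "W 0 = eps * \<alpha> ^ N * W (- int N)"
    unfolding W_def using reverse_window_sum[OF _ q_sym] by blast
  also have "- int N = 1 - int n" using N by simp
  finally have "W 0 = eps * \<alpha> ^ N * W (1 - int n)" .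
  moreover have "W 0 = (- \<alpha>) ^ N * W (1 - int n)" using geometric[of N] N by simp
  ultimately have "2 * ((- 1) ^ N * \<alpha> ^ N * W (1 - int n)) = 0"
    using eps N by (simp add: power_minus[of \<alpha>] algebra_simps)
  then have W1: "W (1 - int n) = 0" using char2 \<alpha> by (auto simp: power_0_left)
  have "(\<Sum>k<n. coeff q k * a (int k - int i)) = 0" if "i < n" for i
  proof -
    have "(\<Sum>k<n. coeff q k * a (int k - int i)) = W (1 - int n + int (N - i))"
      unfolding W_def N lessThan_Suc_atMost using that N by (intro sum.cong refl) (auto simp: of_nat_diff)
    then show ?thesis using geometric[of "N - i"] W1 by simp
  qed
  then show False using toeplitz_singular_of_annihilator[of q n a] q N det by simp
qed

section \<open>The fragments (a)--(d)\<close>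

lemma sum_atMost_sparse:
  fixes g :: "nat \<Rightarrow> 'a::comm_monoid_add"
  assumes "S \<subseteq> {..r}" and "\<And>k. k \<le> r \<Longrightarrow> k \<notin> S \<Longrightarrow> g k = 0"
  shows "(\<Sum>k\<le>r. g k) = (\<Sum>k\<in>S. g k)"
  by (rule sum.mono_neutral_right) (use assms in \<open>auto intro: finite_subset\<close>)

text \<open>The hypotheses of the theorem together with (C1), written coefficientwise, and (C2).\<close>

locale frobenius_conditions =
  fixes f :: "'a::field \<Rightarrow> 'a" and eps :: 'a and chi p :: "'a poly" and s n :: nat
  assumes inv: "is_involution f" and char2: "(2::'a) \<noteq> 0"
    and eps: "eps = 1 \<or> eps = -1" and eps_nonid: "f \<noteq> id \<longrightarrow> eps = 1"
    and n: "n \<ge> 1" and dn: "degree chi = n"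
    and p: "lead_coeff p = 1" "irreducible p" and chi: "chi = p ^ s"
    and reciprocal: "\<And>k. k \<le> n \<Longrightarrow> f (coeff chi (n - k)) = f (coeff chi 0) * coeff chi k"
    and C2: "f = id \<and> eps = (-1) ^ n \<longrightarrow> degree p > 1"
begin

abbreviation "c \<equiv> coeff chi"
abbreviation "q \<equiv> p ^ (s - 1)"

lemmas f_simps = involution_simps[OF inv]

lemma mon: "lead_coeff chi = 1" using chi p by (simp add: lead_coeff_power)

lemma c0_unit: "f (c 0) * c 0 = 1" by (rule reciprocal_constant_coeff[OF inv mon dn reciprocal])

lemma c0_nonzero: "c 0 \<noteq> 0" using c0_unit by auto

lemma eps_simps: "f eps = eps" "eps * eps = 1" using eps f_simps by auto

lemma p_nonzero: "p \<noteq> 0" using p(2) by auto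

lemma n_eq: "n = s * degree p" using dn chi p_nonzero by (simp add: degree_power_eq)

lemma s_pos: "s \<ge> 1" using n_eq n by (cases s) auto

lemma degree_q: "degree q + degree p = n"
  using n_eq p_nonzero s_pos by (cases s) (auto simp: degree_power_eq)

lemma degree_q_le: "degree q \<le> n - 1" using degree_q irreducible_degree_pos[OF p(2)] by auto

lemma lead_coeff_q: "coeff q (degree q) = 1" using p by (simp add: lead_coeff_power)

lemma coeff_q_0: "coeff q 0 \<noteq> 0"
proof -
  have "c 0 = coeff p 0 ^ s" using chi by (simp add: coeff_0_power)
  then have "coeff p 0 \<noteq> 0" using c0_nonzero s_pos by (cases s) auto
  then show ?thesis by (simp add: coeff_0_power)
qed

lemma singular_window:
  assumes rec: "recurrent chi a (1 - int n) (int n - 1)" and det: "det (toeplitz_mat n a) = 0"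
    and l: "1 - int n \<le> l" "l + int (degree q) \<le> int n - 1"
  shows "(\<Sum>k\<le>degree q. coeff q k * a (l + int k)) = 0"
  using singular_toeplitz_recurrent[OF mon dn c0_nonzero n chi field_poly_irreducible_imp_prime[OF p(2)] rec det] l
  unfolding recurrent_def by auto

lemmas fragment_worksI' = fragment_worksI[OF inv mon dn n reciprocal]

text \<open>In a singular case the sequence is \<open>q\<close>-recurrent; applied to the window centred at \<open>0\<close>
  this leaves only the two end terms of a fragment that vanishes inside.\<close>

lemma singular_endpoints:
  assumes rec: "recurrent chi a (1 - int n) (int n - 1)" and det: "det (toeplitz_mat n a) = 0"
    and r: "degree q \<le> 2 * r" "r < n" and inside: "\<And>i. - int r < i \<Longrightarrow> i < int r \<Longrightarrow> a i = 0"
  shows "coeff q 0 * a (- int r) + (if degree q = 2 * r \<and> r \<noteq> 0 then a (int r) else 0) = 0"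
proof -
  let ?S = "{0} \<union> (if degree q = 2 * r \<and> r \<noteq> 0 then {2 * r} else {})"
  have "0 = (\<Sum>k\<le>degree q. coeff q k * a (- int r + int k))"
    by (rule singular_window[OF rec det, symmetric]) (use r degree_q_le in auto)
  also have "\<dots> = (\<Sum>k\<in>?S. coeff q k * a (- int r + int k))"
    by (rule sum_atMost_sparse) (use r inside in \<open>auto split: if_splits\<close>)
  finally show ?thesis using lead_coeff_q by (auto split: if_splits simp: add.commute)
qed

lemma singular_endpoints_linear:
  assumes "degree q = 2 * r" "n \<le> 2 * r + 1"
  obtains \<alpha> where "p = [:\<alpha>, 1:]" "n = 2 * r + 1" "coeff q 0 = \<alpha> ^ (n - 1)"
proof -
  have "degree p = 1" "n = 2 * r + 1"
    using assms degree_q degree_q_le irreducible_degree_pos[OF p(2)] by auto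
  moreover from this have "s = n" using n_eq by simp
  ultimately show thesis
    using that[of "coeff p 0"] monic_degree_one_eq[OF p(1)] by (simp add: coeff_0_power)
qed

lemma fragment_a:
  assumes nm: "n = 2 * m" and ne: "c 0 \<noteq> eps"
  shows "fragment_works f eps chi (frobenius_block chi) m
           (\<lambda>i. if i = - int m then eps * f (c 0) - 1
                else if i = int m then c 0 - eps else 0)"
  (is "fragment_works _ _ _ _ _ ?v")
proof (rule fragment_worksI')
  have m: "m \<ge> 1" using nm n by auto
  show "n \<le> 2 * m + 1" "2 * m \<le> n" using nm by auto
  show "?v (- t) = eps * f (?v t)" if "\<bar>t\<bar> \<le> int m" for t
    using m eps_simps by (auto simp: f_simps algebra_simps)
  have "(\<Sum>i\<le>n. c i * ?v (- int m + int i)) = c 0 * (eps * f (c 0) - 1) + c n * (c 0 - eps)"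
    by (subst sum_atMost_sparse[of "{0, n}"]) (use nm m in auto)
  also have "\<dots> = eps * (f (c 0) * c 0) - eps" using mon dn by (simp add: algebra_simps)
  finally show "(\<Sum>i\<le>n. c i * ?v (- int m + int i)) = 0" using c0_unit by simp
  fix a assume rec: "recurrent chi a (1 - int n) (int n - 1)"
    and agree: "\<forall>i. - int m \<le> i \<and> i \<le> int m \<longrightarrow> a i = ?v i"
  show "det (toeplitz_mat n a) \<noteq> 0"
  proof
    assume det: "det (toeplitz_mat n a) = 0"
    have "coeff q 0 * a (- int m) + (if degree q = 2 * m \<and> m \<noteq> 0 then a (int m) else 0) = 0"
      by (rule singular_endpoints[OF rec det]) (use agree m nm degree_q_le in auto)
    moreover have "degree q \<noteq> 2 * m" using degree_q_le nm m by auto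
    ultimately have "coeff q 0 * (eps * f (c 0) - 1) = 0"
      using agree m by auto
    then have "eps * f (c 0) = 1" using coeff_q_0 by simp
    then have "f (c 0) = f eps" using eps_simps by (metis mult.left_commute mult_1_right)
    then show False using ne f_simps(7) by metis
  qed
qed

lemma reciprocal_id: "f = id \<Longrightarrow> k \<le> n \<Longrightarrow> c (n - k) = c 0 * c k"
  using reciprocal[of k] by simp

lemma fragment_b:
  assumes nm: "n = 2 * m" and eps1: "eps = 1" and id: "f = id"
  shows "fragment_works f eps chi (frobenius_block chi) m
           (\<lambda>i. if n = 2 then
                  (if i = -1 \<or> i = 1 then c (n - 1) else if i = 0 then -2 else 0)
                else
                  (if i = - int m \<or> i = int m then c (n - 1)
                   else if i = - int m + 1 \<or> i = int m - 1 then -1 else 0))"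
  (is "fragment_works _ _ _ _ _ ?v")
proof (rule fragment_worksI')
  have m: "m \<ge> 1" using nm n by auto
  have p2: "degree p \<ge> 2" using C2 id eps1 nm by auto
  have c_last: "c (n - 1) = c 0 * c 1" and c_n: "c n = 1" using reciprocal_id[OF id, of 1] m nm mon dn by auto
  show "n \<le> 2 * m + 1" "2 * m \<le> n" using nm by auto
  show "?v (- t) = eps * f (?v t)" if "\<bar>t\<bar> \<le> int m" for t
    using eps1 id by auto
  have "(\<Sum>i\<le>n. c i * ?v (- int m + int i)) = c 0 * c (n - 1) - c 1 - c (n - 1) + c n * c (n - 1)"
  proof (cases "n = 2")
    case True
    then show ?thesis using nm by (simp add: numeral_2_eq_2 algebra_simps)
  next
    case False
    then show ?thesis using nm m
      by (subst sum_atMost_sparse[of "{0, 1, n - 1, n}"]) (auto simp: algebra_simps)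
  qed
  also have "\<dots> = 0" using c_last c_n c0_unit id by (simp add: algebra_simps)
  finally show "(\<Sum>i\<le>n. c i * ?v (- int m + int i)) = 0" .
  fix a assume rec: "recurrent chi a (1 - int n) (int n - 1)"
    and agree: "\<forall>i. - int m \<le> i \<and> i \<le> int m \<longrightarrow> a i = ?v i"
  show "det (toeplitz_mat n a) \<noteq> 0"
  proof
    assume det: "det (toeplitz_mat n a) = 0"
    have ends: "coeff q 0 * a (- int (m - 1)) + (if degree q = 2 * (m - 1) \<and> m - 1 \<noteq> 0 then a (int (m - 1)) else 0) = 0"
      by (rule singular_endpoints[OF rec det]) (use agree m nm degree_q p2 in auto)
    show False
    proof (cases "n = 2")
      case True
      then show False using ends agree nm coeff_q_0 char2 by auto
    next
      case False
      then have "a (- int (m - 1)) = -1" "a (int (m - 1)) = -1" using agree m nm by auto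
      then have "coeff q 0 = -1" and "degree p = 2"
        using ends coeff_q_0 degree_q p2 nm by (auto split: if_splits)
      then have "coeff p 0 ^ (s - 1) = -1" by (simp add: coeff_0_power)
      then show False
        using reciprocal_id_quadratic_constant_coeff[OF mon dn char2 reciprocal_id[OF id] p _ chi s_pos]
          \<open>degree p = 2\<close> by blast
    qed
  qed
qed

lemma fragment_c:
  assumes k: "k = - f k" "k \<noteq> 0"
    and cs: "(n = 2 * m \<and> c 0 = 1 \<and> f \<noteq> id) \<or>
             (n = 2 * m + 1 \<and> (\<exists>\<alpha>. p = [:\<alpha>, 1:] \<and> \<alpha> ^ (n - 1) = -1))"
  shows "fragment_works f eps chi (frobenius_block chi) m
           (\<lambda>i. if i = - int m then - k else if i = int m then k else 0)"
  (is "fragment_works _ _ _ _ _ ?v")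
proof (rule fragment_worksI')
  have "f \<noteq> id" using k char2 by (auto simp: eq_neg_iff_add_eq_0 simp flip: mult_2)
  then have eps1: "eps = 1" using eps_nonid by simp
  have m: "m \<ge> 1"
    using cs n char2 by (cases m) (auto simp: eq_neg_iff_add_eq_0)
  show "n \<le> 2 * m + 1" "2 * m \<le> n" using cs by auto
  show "?v (- t) = eps * f (?v t)" if "\<bar>t\<bar> \<le> int m" for t
    using m eps1 k f_simps by (auto simp: minus_equation_iff[of k])
  show "(\<Sum>i\<le>n. c i * ?v (- int m + int i)) = 0" if "2 * m = n"
    using that cs m mon dn by (subst sum_atMost_sparse[of "{0, n}"]) auto
  fix a assume rec: "recurrent chi a (1 - int n) (int n - 1)"
    and agree: "\<forall>i. - int m \<le> i \<and> i \<le> int m \<longrightarrow> a i = ?v i"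
  show "det (toeplitz_mat n a) \<noteq> 0"
  proof
    assume det: "det (toeplitz_mat n a) = 0"
    have "coeff q 0 * a (- int m) + (if degree q = 2 * m \<and> m \<noteq> 0 then a (int m) else 0) = 0"
      by (rule singular_endpoints[OF rec det]) (use agree m cs degree_q_le in auto)
    then have ends: "coeff q 0 * (- k) + (if degree q = 2 * m \<and> m \<noteq> 0 then k else 0) = 0"
      using agree m by auto
    show False
    proof (cases "degree q = 2 * m")
      case True
      moreover have "n \<le> 2 * m + 1" using cs by auto
      ultimately obtain \<alpha> where "p = [:\<alpha>, 1:]" "coeff q 0 = \<alpha> ^ (n - 1)" "n = 2 * m + 1"
        using singular_endpoints_linear by metis
      then have "coeff q 0 = -1" using cs by auto
      then show False using ends True m k char2 by (simp flip: mult_2)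
    qed (use ends coeff_q_0 k in simp)
  qed
qed

lemma fragment_d:
  assumes nm: "n = 2 * m + 1" and not_c: "\<not> (\<exists>\<alpha>. p = [:\<alpha>, 1:] \<and> \<alpha> ^ (n - 1) = -1)"
  shows "fragment_works f eps chi (frobenius_block chi) m
           (\<lambda>i. if i = - int m then eps else if i = int m then 1 else 0)"
  (is "fragment_works _ _ _ _ _ ?v")
proof (rule fragment_worksI')
  have nonlinear: "degree p > 1" if "eps = -1"
    using that eps_nonid char2 C2 nm by (auto simp: eq_neg_iff_add_eq_0)
  show "n \<le> 2 * m + 1" "2 * m \<le> n" using nm by auto
  show "?v (- t) = eps * f (?v t)" if "\<bar>t\<bar> \<le> int m" for t
  proof (cases "m = 0")
    case True
    then have "eps = 1" using eps nonlinear degree_q nm by auto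
    then show ?thesis using True that f_simps by simp
  qed (use eps_simps f_simps in auto)
  show "(\<Sum>i\<le>n. c i * ?v (- int m + int i)) = 0" if "2 * m = n" using that nm by simp
  fix a assume rec: "recurrent chi a (1 - int n) (int n - 1)"
    and agree: "\<forall>i. - int m \<le> i \<and> i \<le> int m \<longrightarrow> a i = ?v i"
  show "det (toeplitz_mat n a) \<noteq> 0"
  proof
    assume det: "det (toeplitz_mat n a) = 0"
    have "coeff q 0 * a (- int m) + (if degree q = 2 * m \<and> m \<noteq> 0 then a (int m) else 0) = 0"
      by (rule singular_endpoints[OF rec det]) (use agree nm degree_q_le in auto)
    then have ends: "coeff q 0 * eps + (if degree q = 2 * m \<and> m \<noteq> 0 then 1 else 0) = 0"
      using agree by auto
    show False
    proof (cases "degree q = 2 * m \<and> m \<noteq> 0")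
      case True
      then obtain \<alpha> where \<alpha>: "p = [:\<alpha>, 1:]" "coeff q 0 = \<alpha> ^ (n - 1)"
        using singular_endpoints_linear nm by auto
      then have "\<alpha> ^ (n - 1) * eps = -1" using ends True by (simp add: eq_neg_iff_add_eq_0)
      then show False using not_c \<alpha> eps nonlinear by auto
    qed (use ends coeff_q_0 eps in auto)
  qed
qed

lemma fragment_works_solution:
  "fragment_works f eps chi (frobenius_block chi) m v \<Longrightarrow> \<exists>X. herm_solution f eps n (frobenius_block chi) X"
  unfolding fragment_works_def Let_def dn by blast

lemma solution_exists: "\<exists>X. herm_solution f eps n (frobenius_block chi) X"
proof (cases "even n")
  case True
  then obtain m where nm: "n = 2 * m" by (metis evenE)
  consider "c 0 \<noteq> eps" | "f = id" "eps = 1" | "f \<noteq> id" "c 0 = 1" | "f = id" "eps = -1" "c 0 = -1"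
    using eps eps_nonid by blast
  then show ?thesis
  proof cases
    case 1 then show ?thesis by (rule fragment_works_solution[OF fragment_a[OF nm]])
  next
    case 2 then show ?thesis by (intro fragment_works_solution[OF fragment_b[OF nm]])
  next
    case 3
    obtain k where "k = - f k" "k \<noteq> 0" using involution_skew_element_exists[OF inv 3(1)] .
    then show ?thesis using 3 nm by (intro fragment_works_solution[OF fragment_c]) auto
  next
    case 4
    then show ?thesis
      using reciprocal_id_constant_coeff[OF mon dn char2 reciprocal_id p chi True] by simp
  qed
next
  case False
  then obtain m where nm: "n = 2 * m + 1" by (metis oddE)
  show ?thesis
  proof (cases "\<exists>\<alpha>. p = [:\<alpha>, 1:] \<and> \<alpha> ^ (n - 1) = -1")
    case False then show ?thesis by (rule fragment_works_solution[OF fragment_d[OF nm]])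
  next
    case True
    then obtain \<alpha> where \<alpha>: "p = [:\<alpha>, 1:]" "\<alpha> ^ (n - 1) = -1" by blast
    show ?thesis
    proof (cases "f = id")
      case True
      have "\<alpha> * \<alpha> = 1"
        using reciprocal_id_linear_power[OF mon dn n reciprocal_id[OF True], of \<alpha> s] chi \<alpha>(1) by simp
      then have "\<alpha> ^ (n - 1) = 1" using nm by (simp add: power_mult power2_eq_square)
      then show ?thesis using \<alpha>(2) char2 by (simp add: eq_neg_iff_add_eq_0)
    next
      case False
      obtain k where "k = - f k" "k \<noteq> 0" using involution_skew_element_exists[OF inv False] .
      then show ?thesis using nm True by (intro fragment_works_solution[OF fragment_c]) auto
    qed
  qed
qed

end

lemma herm_solution_imp_C2:
  fixes p :: "'a::field poly"
  assumes mon: "lead_coeff chi = 1" and dn: "degree chi = n" and n: "n \<ge> 1" and char2: "(2::'a) \<noteq> 0"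
    and p: "lead_coeff p = 1" "irreducible p" and chi: "chi = p ^ s"
    and sol: "herm_solution id eps n (frobenius_block chi) X" and eps: "eps = (-1) ^ n"
  shows "degree p > 1"
proof (rule ccontr)
  assume "\<not> degree p > 1"
  then have p1: "degree p = 1" using irreducible_degree_pos[OF p(2)] by simp
  then have "s = n" using dn chi p(2) by (auto simp: degree_power_eq)
  then have "chi = [:coeff p 0, 1:] ^ n" using chi monic_degree_one_eq[OF p(1) p1] by simp
  then show False by (rule herm_solution_linear_power_impossible[OF mon dn n char2 _ eps sol])
qed

theorem theorem9:
  fixes inv_f :: "'a::field \<Rightarrow> 'a" and eps :: 'a
    and chi p :: "'a poly" and s n :: nat and Phi :: "'a mat"
  assumes inv: "is_involution inv_f"
    and char2: "(2::'a) \<noteq> 0"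
    and eps: "eps = 1 \<or> eps = -1"
    and eps_nonid: "inv_f \<noteq> id \<longrightarrow> eps = 1"
    and n: "n \<ge> 1" and deg: "degree chi = n"
    and p: "lead_coeff p = 1" "irreducible p" and chi: "chi = p ^ s"
    and Phi: "Phi = frobenius_block chi"
  defines "C1 \<equiv> coeff chi 0 \<noteq> 0 \<and> chi = dual_poly inv_f chi"
    and "C2 \<equiv> (inv_f = id \<and> eps = (-1) ^ n \<longrightarrow> degree p > 1)"
  shows "((\<exists>X. herm_solution inv_f eps n Phi X) \<longleftrightarrow> C1 \<and> C2) \<and>
    (C1 \<and> C2 \<longrightarrow>
      \<comment> \<open>(a)\<close>
      (\<forall>m. n = 2 * m \<and> coeff chi 0 \<noteq> eps \<longrightarrow>
         fragment_works inv_f eps chi Phi m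
           (\<lambda>i. if i = - int m then eps * inv_f (coeff chi 0) - 1
                else if i = int m then coeff chi 0 - eps else 0)) \<and>
      \<comment> \<open>(b)\<close>
      (\<forall>m. n = 2 * m \<and> eps = 1 \<and> inv_f = id \<longrightarrow>
         fragment_works inv_f eps chi Phi m
           (\<lambda>i. if n = 2 then
                  (if i = -1 \<or> i = 1 then coeff chi (n - 1) else if i = 0 then -2 else 0)
                else
                  (if i = - int m \<or> i = int m then coeff chi (n - 1)
                   else if i = - int m + 1 \<or> i = int m - 1 then -1 else 0))) \<and>
      \<comment> \<open>(c)\<close>
      (\<forall>m k. k = - inv_f k \<and> k \<noteq> 0 \<and>
          ((n = 2 * m \<and> coeff chi 0 = 1 \<and> inv_f \<noteq> id) \<or>
           (n = 2 * m + 1 \<and> (\<exists>\<alpha>. p = [:\<alpha>, 1:] \<and> \<alpha> ^ (n - 1) = -1))) \<longrightarrow>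
         fragment_works inv_f eps chi Phi m
           (\<lambda>i. if i = - int m then - k else if i = int m then k else 0)) \<and>
      \<comment> \<open>(d)\<close>
      (\<forall>m. n = 2 * m + 1 \<and> \<not> (\<exists>\<alpha>. p = [:\<alpha>, 1:] \<and> \<alpha> ^ (n - 1) = -1) \<longrightarrow>
         fragment_works inv_f eps chi Phi m
           (\<lambda>i. if i = - int m then eps else if i = int m then 1 else 0)))"
proof -
  have mon: "lead_coeff chi = 1" using chi p(1) by (simp add: lead_coeff_power)
  have C1: "C1 \<longleftrightarrow> (\<forall>k\<le>n. inv_f (coeff chi (n - k)) = inv_f (coeff chi 0) * coeff chi k)"
    unfolding C1_def by (rule dual_poly_fixed_iff[OF inv mon deg])
  have necessary: "C1 \<and> C2" if sol: "herm_solution inv_f eps n Phi X" for X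
  proof
    obtain a where "\<And>k. k \<le> n \<Longrightarrow> inv_f (coeff chi (n - k)) = inv_f (coeff chi 0) * coeff chi k"
      using herm_solution_necessary[OF inv mon deg n sol[unfolded Phi]] by blast
    then show C1 unfolding C1 by blast
    show C2 unfolding C2_def using herm_solution_imp_C2[OF mon deg n char2 p chi] sol Phi by blast
  qed
  have conditions: "frobenius_conditions inv_f eps chi p s n" if "C1 \<and> C2"
    using that inv char2 eps eps_nonid n deg p chi unfolding C1 C2_def by unfold_locales auto
  show ?thesis
    unfolding Phi
  proof (intro conjI impI allI)
    show "(\<exists>X. herm_solution inv_f eps n (frobenius_block chi) X) \<longleftrightarrow> C1 \<and> C2"
      using necessary frobenius_conditions.solution_exists[OF conditions] Phi by blast
  qed (use frobenius_conditions.fragment_a[OF conditions] frobenius_conditions.fragment_b[OF conditions]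
      frobenius_conditions.fragment_c[OF conditions] frobenius_conditions.fragment_d[OF conditions] in blast)+
qed

end
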